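(* Every cutting sequence of a linear trajectory on $S_E$ is infinitely derivable.
   Context: Let $E$ be the regular hexagon of side length $1$, centred at the origin, with two horizontal sides. Its sides are labelled as follows: the two horizontal sides are labelled $A$, the upper-right and lower-left sides are labelled $B$, and the lower-right and upper-left sides are labelled $C$. Gluing opposite parallel sides by translations gives $S_E$ (a flat torus with two marked points, the classes of the vertices). A linear trajectory is a bi-infinite straight line on $S_E$ avoiding the marked points. Its cutting sequence $c(\tau)\in\{A,B,C\}^{\mathbb Z}$ lists, up to shift, the labels of the sides successively crossed. For an ordered triple $(x,y,z)$ of the three distinct letters $A,B,C$, the associated diagram is the directed graph on $\{A,B,C\}$ with exactly the arrows $x\to y$, $y\to x$, $y\to z$, $z\to y$, $z\to z$. The six transition diagrams are those of the following triples: - $\mathscr D_0$: $(A,C,B)$; - $\mathscr D_1$: $(C,A,B)$; - $\mathscr D_2$: $(C,B,A)$; - $\mathscr D_3$: $(B,C,A)$; - $\mathscr D_4$: $(B,A,C)$; - $\mathscr D_5$: $(A,B,C)$. A word $w\in\{A,B,C\}^{\mathbb Z}$ is admissible if, for some $k$, every pair of consecutive letters $w_n\to w_{n+1}$ is an arrow of $\mathscr D_k$. In $w=(w_n)$, the letter $w_n$ is sandwiched if $w_{n-1}=w_{n+1}$. The derived sequence $w'$ of an admissible word $w$ keeps, in order, exactly the sandwiched letters of $w$. The word $w$ is derivable if it is admissible and $w'$ is admissible. The iterated derived sequences are defined by $w^{(0)}=w$ and $w^{(n+1)}=(w^{(n)})'$. The word $w$ is infinitely derivable if $w^{(n)}$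 is derivable for every $n\ge0$. *)

theory Defs
  imports "HOL-Analysis.Analysis"
begin

datatype lbl = A | B | C

definition hex_vertex :: "nat \<Rightarrow> complex" where
  "hex_vertex k = cis (of_nat k * pi / 3)"

text \<open>The sides of E with their labels: A = top and bottom sides, B = upper-right and
  lower-left, C = lower-right and upper-left.\<close>
fun side :: "lbl \<Rightarrow> complex set" where
  "side A = closed_segment (hex_vertex 1) (hex_vertex 2) \<union> closed_segment (hex_vertex 4) (hex_vertex 5)"
| "side B = closed_segment (hex_vertex 0) (hex_vertex 1) \<union> closed_segment (hex_vertex 3) (hex_vertex 4)"
| "side C = closed_segment (hex_vertex 5) (hex_vertex 0) \<union> closed_segment (hex_vertex 2) (hex_vertex 3)"

text \<open>The lattice of translations generated by the side gluings; S_E = plane / hex_lattice,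
  and the translates of E tile the plane.\<close>
definition hex_lattice :: "complex set" where
  "hex_lattice = {of_int m * Complex (3/2) (sqrt 3 / 2) + of_int n * Complex 0 (sqrt 3) | m n. True}"

definition edges :: "lbl \<Rightarrow> complex set" where
  "edges l = (\<Union>u\<in>hex_lattice. (\<lambda>z. z + u) ` side l)"

definition marked_lifts :: "complex set" where
  "marked_lifts = {hex_vertex k + u | k u. k < 6 \<and> u \<in> hex_lattice}"

text \<open>A linear trajectory, lifted to the universal cover: the line t \<mapsto> p + t v, v \<noteq> 0,
  avoiding the marked points.\<close>
definition linear_trajectory :: "complex \<Rightarrow> complex \<Rightarrow> bool" where
  "linear_trajectory p v \<longleftrightarrow> v \<noteq> 0 \<and> (\<forall>t::real. p + of_real t * v \<notin> marked_lifts)"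

definition is_cutting_seq :: "complex \<Rightarrow> complex \<Rightarrow> (int \<Rightarrow> lbl) \<Rightarrow> bool" where
  "is_cutting_seq p v c \<longleftrightarrow>
     (\<exists>\<sigma> :: int \<Rightarrow> real. strict_mono \<sigma> \<and>
        range \<sigma> = {t. \<exists>l. p + of_real t * v \<in> edges l} \<and>
        (\<forall>n. p + of_real (\<sigma> n) * v \<in> edges (c n)))"

definition diag_arrows :: "lbl \<times> lbl \<times> lbl \<Rightarrow> (lbl \<times> lbl) set" where
  "diag_arrows t = (case t of (x, y, z) \<Rightarrow> {(x, y), (y, x), (y, z), (z, y), (z, z)})"

fun trans_diag :: "nat \<Rightarrow> lbl \<times> lbl \<times> lbl" where
  "trans_diag 0 = (A, C, B)"
| "trans_diag (Suc 0) = (C, A, B)"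
| "trans_diag (Suc (Suc 0)) = (C, B, A)"
| "trans_diag (Suc (Suc (Suc 0))) = (B, C, A)"
| "trans_diag (Suc (Suc (Suc (Suc 0)))) = (B, A, C)"
| "trans_diag _ = (A, B, C)"

text \<open>A (possibly finite or one-sided) subsequence of w : int \<Rightarrow> lbl is represented by the set S
  of positions kept, in the order of the integers.  consec S n m: m is the next kept position
  after n.\<close>
definition consec :: "int set \<Rightarrow> int \<Rightarrow> int \<Rightarrow> bool" where
  "consec S n m \<longleftrightarrow> n \<in> S \<and> m \<in> S \<and> n < m \<and> (\<forall>j\<in>S. \<not> (n < j \<and> j < m))"

definition admissible :: "(int \<Rightarrow> lbl) \<Rightarrow> int set \<Rightarrow> bool" where
  "admissible w S \<longleftrightarrow>
     (\<exists>k<6. \<forall>n m. consec S n m \<longrightarrow> (w n, w m) \<in> diag_arrows (trans_diag k))"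

definition sandwiched :: "(int \<Rightarrow> lbl) \<Rightarrow> int set \<Rightarrow> int \<Rightarrow> bool" where
  "sandwiched w S n \<longleftrightarrow> (\<exists>a b. consec S a n \<and> consec S n b \<and> w a = w b)"

definition derived :: "(int \<Rightarrow> lbl) \<Rightarrow> int set \<Rightarrow> int set" where
  "derived w S = {n \<in> S. sandwiched w S n}"

definition derivable :: "(int \<Rightarrow> lbl) \<Rightarrow> int set \<Rightarrow> bool" where
  "derivable w S \<longleftrightarrow> admissible w S \<and> admissible w (derived w S)"

definition infinitely_derivable :: "(int \<Rightarrow> lbl) \<Rightarrow> bool" where
  "infinitely_derivable w \<longleftrightarrow> (\<forall>n. derivable w ((derived w ^^ n) UNIV))"

end

theory Submission
  imports Defs
begin

text \<open>Write points as z = g + a \<omega> with \<omega> = e^(i\<pi>/3). In these lattice coordinates the translates of E are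
  the hexagons |a - i|, |g - j|, |a + g - i - j| \<le> 1 centred at the integer points (i, j) with
  3 dividing i - j. By the rotational symmetry of the tiling we may assume that the direction
  (da, dg) of the trajectory has da, dg \<ge> 0. The line then leaves every hexagon through one of its
  three upper sides, and the transverse coordinate y = dg (a - i) - da (g - j) of the exit point
  determines the side crossed (A, B or C according as y lies in (dg, da + dg), (-da, dg) or
  (-(da + dg), -da)) and evolves under a three-interval exchange. So every cutting sequence codes
  an orbit of such an exchange, up to a relabelling of the letters.

  For da \<le> dg the sandwiched points of such an orbit form an orbit of the induced exchange,
  which after a piecewise translation is again an exchange of the same kind, with the
  renormalized parameters of one of three Farey-type regimes (3 da \<le> dg, 2 da \<le> dg < 3 da,
  dg < 2 da) and permuted labels; the reflection y \<mapsto> -y handles da > dg. Codings of these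
  exchanges are admissible, since consecutive labels follow the transition diagram (A, C, B) up
  to the relabelling, so every derived sequence of a cutting sequence is admissible.\<close>

section \<open>A three-interval exchange\<close>

definition iet_label :: "real \<Rightarrow> real \<Rightarrow> real \<Rightarrow> lbl" where
  "iet_label da dg x = (if dg < x then A else if x < -da then C else B)"

fun iet_shift :: "real \<Rightarrow> real \<Rightarrow> lbl \<Rightarrow> real" where
  "iet_shift da dg A = - da - 2*dg"
| "iet_shift da dg B = da - dg"
| "iet_shift da dg C = 2*da + dg"

definition iet_map :: "real \<Rightarrow> real \<Rightarrow> real \<Rightarrow> real" where
  "iet_map da dg x = x + iet_shift da dg (iet_label da dg x)"

definition iet_generic :: "real \<Rightarrow> real \<Rightarrow> real \<Rightarrow> bool" where
  "iet_generic da dg x \<longleftrightarrow> -(da+dg) < x \<and> x < da+dg \<and> x \<noteq> dg \<and> x \<noteq> -da"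

lemma iet_regions:
  assumes "iet_generic da dg x" "0 \<le> da" "0 \<le> dg"
  obtains "dg < x" "x < da+dg" "iet_label da dg x = A" "iet_map da dg x = x - da - 2*dg"
   | "-(da+dg) < x" "x < -da" "iet_label da dg x = C" "iet_map da dg x = x + 2*da + dg"
   | "-da < x" "x < dg" "iet_label da dg x = B" "iet_map da dg x = x + da - dg"
  using assms unfolding iet_generic_def iet_label_def iet_map_def by (smt (verit) iet_shift.simps)

definition swap_AC :: "lbl \<Rightarrow> lbl" where
  "swap_AC l = (case l of A \<Rightarrow> C | B \<Rightarrow> B | C \<Rightarrow> A)"

lemma swap_AC_swap_AC [simp]: "swap_AC (swap_AC l) = l"
  by (cases l) (simp_all add: swap_AC_def)

lemma iet_label_flip: "0 \<le> da + dg \<Longrightarrow> iet_label dg da (-x) = swap_AC (iet_label da dg x)"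
  by (auto simp: iet_label_def swap_AC_def)

lemma iet_map_flip: "0 \<le> da + dg \<Longrightarrow> iet_map dg da (-x) = - iet_map da dg x"
  by (auto simp: iet_map_def iet_label_flip swap_AC_def iet_label_def)

lemma iet_generic_flip: "iet_generic dg da (-x) \<longleftrightarrow> iet_generic da dg x"
  by (auto simp: iet_generic_def)

section \<open>Renormalization\<close>

definition ren_da :: "real \<Rightarrow> real \<Rightarrow> real" where
  "ren_da da dg = (if 3*da \<le> dg then da else if 2*da \<le> dg then 3*da - dg else 2*da - dg)"

definition ren_dg :: "real \<Rightarrow> real \<Rightarrow> real" where
  "ren_dg da dg = (if 3*da \<le> dg then dg - 3*da else if 2*da \<le> dg then dg - 2*da else da)"

fun ren_shift :: "real \<Rightarrow> real \<Rightarrow> lbl \<Rightarrow> real" where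
  "ren_shift da dg A = - 3*da"
| "ren_shift da dg B = (if 3*da \<le> dg then da - dg else 0)"
| "ren_shift da dg C = (if 2*da \<le> dg then dg - da else 3*da)"

definition ren_coord :: "real \<Rightarrow> real \<Rightarrow> real \<Rightarrow> real" where
  "ren_coord da dg x = x + ren_shift da dg (iet_label da dg x)"

fun ren_label :: "real \<Rightarrow> real \<Rightarrow> lbl \<Rightarrow> lbl" where
  "ren_label da dg A = (if 3*da \<le> dg then A else if 2*da \<le> dg then B else C)"
| "ren_label da dg B = (if 3*da \<le> dg then C else if 2*da \<le> dg then A else B)"
| "ren_label da dg C = (if 3*da \<le> dg then B else if 2*da \<le> dg then C else A)"

lemma ren_label_ren_label [simp]: "ren_label da dg (ren_label da dg l) = l"
  by (cases l) auto

lemma ren_params: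
  assumes "0 \<le> da" "da \<le> dg" "0 < da + dg"
  shows "0 \<le> ren_da da dg" "0 \<le> ren_dg da dg" "0 < ren_da da dg + ren_dg da dg"
  using assms by (auto simp: ren_da_def ren_dg_def)

lemma iet_sandwich_within_five:
  fixes da dg x0 x1 x2 x3 x4 x5 x6 :: real
  assumes "0 \<le> da" "0 \<le> dg"
    and "iet_generic da dg x0" "iet_generic da dg x1" "iet_generic da dg x2" "iet_generic da dg x3"
      "iet_generic da dg x4" "iet_generic da dg x5" "iet_generic da dg x6"
    and "x1 = iet_map da dg x0" "x2 = iet_map da dg x1" "x3 = iet_map da dg x2" "x4 = iet_map da dg x3"
      "x5 = iet_map da dg x4" "x6 = iet_map da dg x5"
  shows "iet_label da dg x0 = iet_label da dg x2 \<or> iet_label da dg x1 = iet_label da dg x3 \<or>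
    iet_label da dg x2 = iet_label da dg x4 \<or> iet_label da dg x3 = iet_label da dg x5 \<or>
    iet_label da dg x4 = iet_label da dg x6"
  using assms unfolding iet_generic_def iet_label_def iet_map_def
  by (smt (verit) iet_shift.simps)

lemma sandwiched_renormalizes:
  fixes da dg x0 x1 x2 :: real
  assumes d: "0 \<le> da" "da \<le> dg"
    and g: "iet_generic da dg x0" "iet_generic da dg x1" "iet_generic da dg x2"
    and "x1 = iet_map da dg x0" "x2 = iet_map da dg x1"
    and "iet_label da dg x0 = iet_label da dg x2"
  shows "iet_label (ren_da da dg) (ren_dg da dg) (ren_coord da dg x1) = ren_label da dg (iet_label da dg x1)"
    and "iet_generic (ren_da da dg) (ren_dg da dg) (ren_coord da dg x1)"
proof -
  have dg: "0 \<le> dg" using d by linarith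
  have "iet_label (ren_da da dg) (ren_dg da dg) (ren_coord da dg x1) = ren_label da dg (iet_label da dg x1)
    \<and> iet_generic (ren_da da dg) (ren_dg da dg) (ren_coord da dg x1)"
    by (insert d assms(6-8)[symmetric] lbl.distinct,
        cases rule: iet_regions[OF g(1) d(1) dg];
        (argo | cases rule: iet_regions[OF g(2) d(1) dg]);
        (argo | cases rule: iet_regions[OF g(3) d(1) dg]);
        (argo | (cases "3*da \<le> dg"; cases "2*da \<le> dg";
          simp (no_asm_simp) add: ren_da_def ren_dg_def ren_coord_def iet_label_def iet_generic_def
            split: if_split; argo)))
  then show "iet_label (ren_da da dg) (ren_dg da dg) (ren_coord da dg x1) = ren_label da dg (iet_label da dg x1)"
    and "iet_generic (ren_da da dg) (ren_dg da dg) (ren_coord da dg x1)" by auto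
qed

lemma sandwiched_next_ren_map:
  fixes da dg x0 x1 x2 x3 x4 x5 x6 x7 :: real
  assumes d: "0 \<le> da" "da \<le> dg"
    and g: "iet_generic da dg x0" "iet_generic da dg x1" "iet_generic da dg x2" "iet_generic da dg x3"
      "iet_generic da dg x4" "iet_generic da dg x5" "iet_generic da dg x6" "iet_generic da dg x7"
    and "x1 = iet_map da dg x0" "x2 = iet_map da dg x1" "x3 = iet_map da dg x2" "x4 = iet_map da dg x3"
      "x5 = iet_map da dg x4" "x6 = iet_map da dg x5" "x7 = iet_map da dg x6"
    and "iet_label da dg x0 = iet_label da dg x2"
  shows "(iet_label da dg x1 = iet_label da dg x3 \<longrightarrow>
      ren_coord da dg x2 = iet_map (ren_da da dg) (ren_dg da dg) (ren_coord da dg x1)) \<and>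
    (iet_label da dg x1 \<noteq> iet_label da dg x3 \<and> iet_label da dg x2 = iet_label da dg x4 \<longrightarrow>
      ren_coord da dg x3 = iet_map (ren_da da dg) (ren_dg da dg) (ren_coord da dg x1)) \<and>
    (iet_label da dg x1 \<noteq> iet_label da dg x3 \<and> iet_label da dg x2 \<noteq> iet_label da dg x4 \<and> iet_label da dg x3 = iet_label da dg x5 \<longrightarrow>
      ren_coord da dg x4 = iet_map (ren_da da dg) (ren_dg da dg) (ren_coord da dg x1)) \<and>
    (iet_label da dg x1 \<noteq> iet_label da dg x3 \<and> iet_label da dg x2 \<noteq> iet_label da dg x4 \<and> iet_label da dg x3 \<noteq> iet_label da dg x5 \<and> iet_label da dg x4 = iet_label da dg x6 \<longrightarrow>
      ren_coord da dg x5 = iet_map (ren_da da dg) (ren_dg da dg) (ren_coord da dg x1)) \<and>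
    (iet_label da dg x1 \<noteq> iet_label da dg x3 \<and> iet_label da dg x2 \<noteq> iet_label da dg x4 \<and> iet_label da dg x3 \<noteq> iet_label da dg x5 \<and> iet_label da dg x4 \<noteq> iet_label da dg x6 \<and> iet_label da dg x5 = iet_label da dg x7 \<longrightarrow>
      ren_coord da dg x6 = iet_map (ren_da da dg) (ren_dg da dg) (ren_coord da dg x1))"
proof -
  have dg: "0 \<le> dg" using d by linarith
  have ren: "iet_label (ren_da da dg) (ren_dg da dg) (ren_coord da dg x1) = ren_label da dg (iet_label da dg x1)"
    using sandwiched_renormalizes(1)[OF d g(1-3)] assms(11,12,18) .
  show ?thesis
    by (insert d assms(11-17)[symmetric] assms(18) ren lbl.distinct,
        cases rule: iet_regions[OF g(1) d(1) dg];
        (argo | cases rule: iet_regions[OF g(2) d(1) dg]);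
        (argo | cases rule: iet_regions[OF g(3) d(1) dg]);
        (argo | cases rule: iet_regions[OF g(4) d(1) dg]);
        (argo | cases rule: iet_regions[OF g(5) d(1) dg]);
        (argo | cases rule: iet_regions[OF g(6) d(1) dg]);
        (argo | cases rule: iet_regions[OF g(7) d(1) dg]);
        (argo | cases rule: iet_regions[OF g(8) d(1) dg]);
        (argo | (cases "3*da \<le> dg"; cases "2*da \<le> dg";
          (argo | (simp (no_asm_simp) only: iet_map_def lbl.distinct simp_thms;
                   simp (no_asm_simp) add: ren_coord_def ren_da_def ren_dg_def; argo)))))
qed

definition iet_orbit :: "real \<Rightarrow> real \<Rightarrow> (nat \<Rightarrow> real) \<Rightarrow> bool" where
  "iet_orbit da dg z \<longleftrightarrow> (\<forall>i. iet_generic da dg (z i) \<and> z (Suc i) = iet_map da dg (z i))"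

lemma iet_orbit_generic: "iet_orbit da dg z \<Longrightarrow> iet_generic da dg (z i)"
  unfolding iet_orbit_def by blast

lemma iet_orbit_steps:
  assumes "iet_orbit da dg z"
  shows "z 1 = iet_map da dg (z 0)" "z 2 = iet_map da dg (z 1)" "z 3 = iet_map da dg (z 2)"
    "z 4 = iet_map da dg (z 3)" "z 5 = iet_map da dg (z 4)" "z 6 = iet_map da dg (z 5)"
    "z 7 = iet_map da dg (z 6)"
  using assms by (simp_all add: iet_orbit_def numeral_eq_Suc)

lemma iet_orbit_sandwich_within_five:
  assumes "iet_orbit da dg z" "0 \<le> da" "0 \<le> dg"
  shows "\<exists>i\<in>{1..5}. iet_label da dg (z (i - 1)) = iet_label da dg (z (i + 1))"
proof -
  note g = iet_orbit_generic[OF assms(1)]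
  from iet_sandwich_within_five[OF assms(2,3) g[of 0] g[of 1] g[of 2] g[of 3] g[of 4] g[of 5] g[of 6]
      iet_orbit_steps(1-6)[OF assms(1)]]
  show ?thesis
  proof (elim disjE)
    assume "iet_label da dg (z 0) = iet_label da dg (z 2)"
    then show ?thesis by (intro bexI[of _ 1]) (simp_all add: numeral_eq_Suc)
  next
    assume "iet_label da dg (z 1) = iet_label da dg (z 3)"
    then show ?thesis by (intro bexI[of _ 2]) (simp_all add: numeral_eq_Suc)
  next
    assume "iet_label da dg (z 2) = iet_label da dg (z 4)"
    then show ?thesis by (intro bexI[of _ 3]) (simp_all add: numeral_eq_Suc)
  next
    assume "iet_label da dg (z 3) = iet_label da dg (z 5)"
    then show ?thesis by (intro bexI[of _ 4]) (simp_all add: numeral_eq_Suc)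
  next
    assume "iet_label da dg (z 4) = iet_label da dg (z 6)"
    then show ?thesis by (intro bexI[of _ 5]) (simp_all add: numeral_eq_Suc)
  qed
qed

lemma iet_orbit_sandwiched_renormalizes:
  assumes "iet_orbit da dg z" "0 \<le> da" "da \<le> dg" "iet_label da dg (z 0) = iet_label da dg (z 2)"
  shows "iet_label (ren_da da dg) (ren_dg da dg) (ren_coord da dg (z 1)) = ren_label da dg (iet_label da dg (z 1))"
    and "iet_generic (ren_da da dg) (ren_dg da dg) (ren_coord da dg (z 1))"
  using sandwiched_renormalizes[OF assms(2,3) iet_orbit_generic[OF assms(1)] iet_orbit_generic[OF assms(1)]
      iet_orbit_generic[OF assms(1)] iet_orbit_steps(1,2)[OF assms(1)] assms(4)]
  by blast+

lemma iet_orbit_next_sandwiched: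
  assumes orb: "iet_orbit da dg z" and d: "0 \<le> da" "da \<le> dg" and j: "2 \<le> j" "j \<le> 6"
    and sw: "\<And>i. 1 \<le> i \<Longrightarrow> i \<le> j \<Longrightarrow>
      iet_label da dg (z (i - 1)) = iet_label da dg (z (i + 1)) \<longleftrightarrow> i = 1 \<or> i = j"
  shows "ren_coord da dg (z j) = iet_map (ren_da da dg) (ren_dg da dg) (ren_coord da dg (z 1))"
proof -
  note g = iet_orbit_generic[OF orb]
  have "iet_label da dg (z 0) = iet_label da dg (z 2)" using sw[of 1] j by (simp add: numeral_eq_Suc)
  note next_map = sandwiched_next_ren_map[OF d g[of 0] g[of 1] g[of 2] g[of 3] g[of 4] g[of 5] g[of 6] g[of 7]
      iet_orbit_steps[OF orb] this]
  from j consider "j = 2" | "j = 3" | "j = 4" | "j = 5" | "j = 6" by linarith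
  then show ?thesis
    by cases (use next_map sw[of 2] sw[of 3] sw[of 4] sw[of 5] sw[of 6] in \<open>simp_all add: numeral_eq_Suc\<close>)
qed

definition unbounded :: "int set \<Rightarrow> bool" where
  "unbounded S \<longleftrightarrow> (\<forall>n. \<exists>m\<in>S. n < m) \<and> (\<forall>n. \<exists>m\<in>S. m < n)"

definition next_in :: "int set \<Rightarrow> int \<Rightarrow> int" where
  "next_in S n = (THE m. consec S n m)"

definition prev_in :: "int set \<Rightarrow> int \<Rightarrow> int" where
  "prev_in S n = (THE a. consec S a n)"

lemma unbounded_UNIV: "unbounded (UNIV :: int set)"
  unfolding unbounded_def by (meson UNIV_I gt_ex lt_ex)

lemma consec_UNIV: "consec UNIV n m \<Longrightarrow> m = n + 1"
  unfolding consec_def by (metis UNIV_I less_add_one linorder_neqE_linordered_idom zless_imp_add1_zle order_le_less)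

lemma consecD: "consec S n m \<Longrightarrow> n \<in> S \<and> m \<in> S \<and> n < m"
  unfolding consec_def by auto

lemma consec_unique: "consec S n m \<Longrightarrow> consec S n m' \<Longrightarrow> m = m'"
  and consec_unique': "consec S a n \<Longrightarrow> consec S a' n \<Longrightarrow> a = a'"
  unfolding consec_def by (meson linorder_neqE_linordered_idom)+

lemma consec_next_ex:
  assumes "m0 \<in> S" "n < m0" "n \<in> S"
  shows "\<exists>m. consec S n m"
proof -
  let ?F = "{m\<in>S. n < m \<and> m \<le> m0}"
  have fin: "finite ?F" by (rule finite_subset[of _ "{n<..m0}"]) auto
  have m: "Min ?F \<in> ?F" using Min_in[OF fin] assms(1,2) by blast
  have "\<not> (n < j \<and> j < Min ?F)" if "j \<in> S" for j
  proof
    assume j: "n < j \<and> j < Min ?F"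
    then have "j \<in> ?F" using m that by auto
    then show False using Min_le[OF fin] j by fastforce
  qed
  then have "consec S n (Min ?F)" using assms(3) m unfolding consec_def by blast
  then show ?thesis ..
qed

lemma consec_prev_ex:
  assumes "m0 \<in> S" "m0 < n" "n \<in> S"
  shows "\<exists>a. consec S a n"
proof -
  let ?F = "{m\<in>S. m < n \<and> m0 \<le> m}"
  have fin: "finite ?F" by (rule finite_subset[of _ "{m0..<n}"]) auto
  have m: "Max ?F \<in> ?F" using Max_in[OF fin] assms(1,2) by blast
  have "\<not> (Max ?F < j \<and> j < n)" if "j \<in> S" for j
  proof
    assume j: "Max ?F < j \<and> j < n"
    then have "j \<in> ?F" using m that by auto
    then show False using Max_ge[OF fin] j by fastforce
  qed
  then have "consec S (Max ?F) n" using assms(3) m unfolding consec_def by blast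
  then show ?thesis ..
qed

lemma consec_next_in: "unbounded S \<Longrightarrow> n \<in> S \<Longrightarrow> consec S n (next_in S n)"
  unfolding next_in_def unbounded_def by (metis consec_next_ex consec_unique theI)

lemma consec_prev_in: "unbounded S \<Longrightarrow> n \<in> S \<Longrightarrow> consec S (prev_in S n) n"
  unfolding prev_in_def unbounded_def by (metis consec_prev_ex consec_unique' theI)

lemma next_in_eq: "consec S n m \<Longrightarrow> next_in S n = m"
  unfolding next_in_def using consec_unique by blast

lemma prev_in_eq: "consec S a n \<Longrightarrow> prev_in S n = a"
  unfolding prev_in_def using consec_unique' by blast

lemma prev_in_next_in:
  assumes "unbounded S" "n \<in> S"
  shows "prev_in S n \<in> S" "next_in S (prev_in S n) = n"
  using consecD[OF consec_prev_in[OF assms]] next_in_eq[OF consec_prev_in[OF assms]] by auto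

lemma next_in_iter_consec:
  assumes "unbounded S" "n \<in> S"
  shows "(next_in S ^^ i) n \<in> S" "consec S ((next_in S ^^ i) n) ((next_in S ^^ Suc i) n)"
proof -
  show mem: "(next_in S ^^ i) n \<in> S"
    by (induction i) (use assms in \<open>auto dest: consec_next_in consecD\<close>)
  show "consec S ((next_in S ^^ i) n) ((next_in S ^^ Suc i) n)"
    using consec_next_in[OF assms(1) mem] by simp
qed

lemma next_in_iter_strict_mono:
  assumes "unbounded S" "n \<in> S"
  shows "strict_mono (\<lambda>i. (next_in S ^^ i) n)"
  by (rule strict_monoI_Suc) (use consecD next_in_iter_consec[OF assms] in blast)

lemma next_in_iter_between:
  assumes "unbounded S" "n \<in> S" "m \<in> S" "n < m" "m < (next_in S ^^ j) n"
  shows "\<exists>i. 0 < i \<and> i < j \<and> m = (next_in S ^^ i) n"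
  using assms(5)
proof (induction j)
  case (Suc j)
  show ?case
  proof (cases "m < (next_in S ^^ j) n")
    case True then show ?thesis using Suc by (meson less_SucI)
  next
    case False
    then have "m = (next_in S ^^ j) n"
      using next_in_iter_consec(2)[OF assms(1,2), of j] Suc.prems assms(3) unfolding consec_def by force
    then show ?thesis using assms(4) by (cases j) auto
  qed
qed (use assms(4) in simp)

lemma prev_in_iter:
  assumes "unbounded S" "n \<in> S"
  shows "(prev_in S ^^ k) n \<in> S" "(next_in S ^^ k) ((prev_in S ^^ k) n) = n"
proof -
  show "(prev_in S ^^ k) n \<in> S"
    by (induction k) (use assms in \<open>auto dest: consec_prev_in consecD\<close>)
  show "(next_in S ^^ k) ((prev_in S ^^ k) n) = n"
    using assms(2)
  proof (induction k arbitrary: n)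
    case (Suc k)
    have "prev_in S n \<in> S" using consec_prev_in[OF assms(1) Suc.prems] consecD by blast
    then have "(next_in S ^^ Suc k) ((prev_in S ^^ Suc k) n) = next_in S (prev_in S n)"
      using Suc.IH by (simp add: funpow_swap1)
    then show ?case using consec_prev_in[OF assms(1) Suc.prems] next_in_eq by simp
  qed simp
qed

section \<open>Codings of the exchange\<close>

text \<open>The relabelling \<pi> absorbs the permutations of letters introduced by the reflection,
  the renormalization and the rotations of the tiling.\<close>

definition iet_coding :: "int set \<Rightarrow> real \<Rightarrow> real \<Rightarrow> (int \<Rightarrow> real) \<Rightarrow> (int \<Rightarrow> lbl) \<Rightarrow> (lbl \<Rightarrow> lbl) \<Rightarrow> bool" where
  "iet_coding S da dg y c \<pi> \<longleftrightarrow> 0 \<le> da \<and> 0 \<le> dg \<and> 0 < da + dg \<and> inj \<pi> \<and> unbounded S \<and>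
     (\<forall>n\<in>S. iet_generic da dg (y n) \<and> c n = \<pi> (iet_label da dg (y n))) \<and>
     (\<forall>n m. consec S n m \<longrightarrow> y m = iet_map da dg (y n))"

lemma iet_codingD:
  assumes "iet_coding S da dg y c \<pi>"
  shows "0 \<le> da" "0 \<le> dg" "0 < da + dg" "inj \<pi>" "unbounded S"
    and "n \<in> S \<Longrightarrow> iet_generic da dg (y n)" "n \<in> S \<Longrightarrow> c n = \<pi> (iet_label da dg (y n))"
    and "consec S n m \<Longrightarrow> y m = iet_map da dg (y n)"
  using assms unfolding iet_coding_def by auto

lemma iet_coding_flip:
  assumes "iet_coding S da dg y c \<pi>"
  shows "iet_coding S dg da (\<lambda>n. - y n) c (\<pi> \<circ> swap_AC)"
proof -
  note d = iet_codingD[OF assms]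
  have s: "0 \<le> da + dg" using d by simp
  have "inj swap_AC" by (metis injI swap_AC_swap_AC)
  then show ?thesis
    unfolding iet_coding_def using d
    by (simp add: iet_label_flip[OF s] iet_map_flip[OF s] iet_generic_flip inj_compose add.commute)
qed

lemma iet_coding_wlog:
  assumes "iet_coding S da dg y c \<pi>"
  obtains da' dg' y' \<pi>' where "da' \<le> dg'" "iet_coding S da' dg' y' c \<pi>'"
proof (cases "da \<le> dg")
  case True then show ?thesis using that assms by blast
next
  case False then show ?thesis using that[OF _ iet_coding_flip[OF assms]] by simp
qed

lemma iet_coding_orbit:
  assumes "iet_coding S da dg y c \<pi>" "n \<in> S"
  shows "iet_orbit da dg (\<lambda>i. y ((next_in S ^^ i) n))"
  using iet_codingD[OF assms(1)] next_in_iter_consec[OF iet_codingD(5)[OF assms(1)] assms(2)]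
  unfolding iet_orbit_def by simp

lemma diag_arrows_map:
  "(a, b) \<in> diag_arrows (x, y, z) \<Longrightarrow> (f a, f b) \<in> diag_arrows (f x, f y, f z)"
  by (auto simp: diag_arrows_def)

lemma trans_diag_onto:
  assumes "x \<noteq> y" "y \<noteq> z" "x \<noteq> z"
  shows "\<exists>k<6. trans_diag k = (x, y, z)"
proof -
  have "(x, y, z) \<in> trans_diag ` {..<6}"
    using assms by (cases x; cases y; cases z) (simp_all add: lessThan_Suc numeral_eq_Suc)
  then show ?thesis by (auto simp: image_iff)
qed

lemma iet_transition:
  assumes "0 \<le> da" "da \<le> dg" "iet_generic da dg x" "iet_generic da dg (iet_map da dg x)"
  shows "(iet_label da dg x, iet_label da dg (iet_map da dg x)) \<in> diag_arrows (A, C, B)"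
proof -
  have dg: "0 \<le> dg" using assms by linarith
  show ?thesis
    by (insert assms(1,2), cases rule: iet_regions[OF assms(3,1) dg];
        cases rule: iet_regions[OF assms(4,1) dg]; (argo | simp add: diag_arrows_def))
qed

lemma iet_coding_admissible:
  assumes "iet_coding S da dg y c \<pi>"
  shows "admissible c S"
proof -
  obtain da dg y \<pi> where le: "da \<le> dg" and cod: "iet_coding S da dg y c \<pi>"
    using iet_coding_wlog[OF assms] .
  note d = iet_codingD[OF cod]
  have "\<pi> A \<noteq> \<pi> C" "\<pi> C \<noteq> \<pi> B" "\<pi> A \<noteq> \<pi> B" using injD[OF d(4)] by blast+
  then obtain k where k: "k < 6" "trans_diag k = (\<pi> A, \<pi> C, \<pi> B)" using trans_diag_onto by blast
  have "(c n, c m) \<in> diag_arrows (trans_diag k)" if "consec S n m" for n m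
  proof -
    have S: "n \<in> S" "m \<in> S" using consecD[OF that] by auto
    have "(iet_label da dg (y n), iet_label da dg (y m)) \<in> diag_arrows (A, C, B)"
      using iet_transition[OF d(1) le d(6)[OF S(1)]] d(6)[OF S(2)] d(8)[OF that] by simp
    then have "(\<pi> (iet_label da dg (y n)), \<pi> (iet_label da dg (y m))) \<in> diag_arrows (\<pi> A, \<pi> C, \<pi> B)"
      by (rule diag_arrows_map)
    then show ?thesis using k(2) d(7)[OF S(1)] d(7)[OF S(2)] by simp
  qed
  then show ?thesis unfolding admissible_def using k(1) by blast
qed

lemma iet_coding_derived_iff:
  assumes "iet_coding S da dg y c \<pi>" "n \<in> S"
  shows "n \<in> derived c S \<longleftrightarrow> iet_label da dg (y (prev_in S n)) = iet_label da dg (y (next_in S n))"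
proof -
  note d = iet_codingD[OF assms(1)]
  have p: "consec S (prev_in S n) n" and q: "consec S n (next_in S n)"
    using consec_prev_in[OF d(5) assms(2)] consec_next_in[OF d(5) assms(2)] .
  have "n \<in> derived c S \<longleftrightarrow> c (prev_in S n) = c (next_in S n)"
    unfolding derived_def sandwiched_def using assms(2) p q prev_in_eq next_in_eq by blast
  also have "\<dots> \<longleftrightarrow> iet_label da dg (y (prev_in S n)) = iet_label da dg (y (next_in S n))"
    using d(7) consecD[OF p] consecD[OF q] injD[OF d(4)] by metis
  finally show ?thesis .
qed

lemma iet_coding_derived_iff_iter:
  assumes cod: "iet_coding S da dg y c \<pi>" and "m \<in> S" "0 < i"
  shows "(next_in S ^^ i) m \<in> derived c S \<longleftrightarrow>
    iet_label da dg (y ((next_in S ^^ (i - 1)) m)) = iet_label da dg (y ((next_in S ^^ (i + 1)) m))"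
proof -
  note unb = iet_codingD(5)[OF cod]
  obtain k where i: "i = Suc k" using \<open>0 < i\<close> by (cases i) auto
  have "prev_in S ((next_in S ^^ i) m) = (next_in S ^^ (i - 1)) m"
    using prev_in_eq next_in_iter_consec(2)[OF unb \<open>m \<in> S\<close>, of k] i by simp
  then show ?thesis
    using iet_coding_derived_iff[OF cod next_in_iter_consec(1)[OF unb \<open>m \<in> S\<close>]] by simp
qed

lemma iet_coding_derived_within_five:
  assumes cod: "iet_coding S da dg y c \<pi>" and "m \<in> S"
  shows "\<exists>i\<in>{1..5}. (next_in S ^^ i) m \<in> derived c S"
  using iet_orbit_sandwich_within_five[OF iet_coding_orbit[OF cod \<open>m \<in> S\<close>] iet_codingD(1,2)[OF cod]]
    iet_coding_derived_iff_iter[OF cod \<open>m \<in> S\<close>] by fastforce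

lemma iet_coding_derived_unbounded:
  assumes cod: "iet_coding S da dg y c \<pi>"
  shows "unbounded (derived c S)"
proof -
  let ?S' = "derived c S" and ?N = "\<lambda>m i. (next_in S ^^ i) m"
  note unb = iet_codingD(5)[OF cod]
  note near = iet_coding_derived_within_five[OF cod]
  have mono: "strict_mono (?N m)" if "m \<in> S" for m
    using next_in_iter_strict_mono[OF unb that] .
  show ?thesis
    unfolding unbounded_def
  proof (intro conjI allI)
    fix b
    obtain q where q: "q \<in> S" "b < q" using unb unfolding unbounded_def by blast
    then obtain i where "i \<in> {1..5}" "?N q i \<in> ?S'" using near by blast
    moreover have "q < ?N q i" using strict_monoD[OF mono[OF q(1)], of 0 i] \<open>i \<in> {1..5}\<close> by simp
    ultimately show "\<exists>m\<in>?S'. b < m" using q(2) by (meson less_trans)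
  next
    fix b
    obtain q0 where q0: "q0 \<in> S" "q0 < b" using unb unfolding unbounded_def by blast
    define q where "q = (prev_in S ^^ 5) q0"
    have q: "q \<in> S" "?N q 5 = q0" unfolding q_def using prev_in_iter[OF unb q0(1)] by auto
    then obtain i where "i \<in> {1..5}" "?N q i \<in> ?S'" using near by blast
    moreover have "?N q i \<le> q0"
      using strict_mono_less_eq[OF mono[OF q(1)], of i 5] \<open>i \<in> {1..5}\<close> q(2) by simp
    ultimately show "\<exists>m\<in>?S'. m < b" using q0(2) by (meson le_less_trans)
  qed
qed

lemma iet_coding_derived_renormalized:
  assumes cod: "iet_coding S da dg y c \<pi>" and le: "da \<le> dg" and n: "n \<in> derived c S"
  shows "iet_label (ren_da da dg) (ren_dg da dg) (ren_coord da dg (y n)) = ren_label da dg (iet_label da dg (y n))"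
    and "iet_generic (ren_da da dg) (ren_dg da dg) (ren_coord da dg (y n))"
proof -
  let ?p = "prev_in S n" and ?N = "\<lambda>m i. (next_in S ^^ i) m"
  note d = iet_codingD[OF cod]
  have "n \<in> S" using n unfolding derived_def by auto
  then have p: "?p \<in> S" "?N ?p 1 = n" using prev_in_next_in[OF d(5)] by auto
  have "iet_label da dg (y (?N ?p 0)) = iet_label da dg (y (?N ?p 2))"
    using iet_coding_derived_iff_iter[OF cod p(1), of 1] n p(2) by (simp add: numeral_2_eq_2)
  from iet_orbit_sandwiched_renormalizes[OF iet_coding_orbit[OF cod p(1)] d(1) le this]
  show "iet_label (ren_da da dg) (ren_dg da dg) (ren_coord da dg (y n)) = ren_label da dg (iet_label da dg (y n))"
    "iet_generic (ren_da da dg) (ren_dg da dg) (ren_coord da dg (y n))" using p(2) by simp_all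
qed

lemma iet_coding_derived_consec:
  assumes cod: "iet_coding S da dg y c \<pi>" and le: "da \<le> dg" and nm: "consec (derived c S) n m"
  shows "ren_coord da dg (y m) = iet_map (ren_da da dg) (ren_dg da dg) (ren_coord da dg (y n))"
proof -
  let ?S' = "derived c S" and ?N = "\<lambda>m i. (next_in S ^^ i) m" and ?L = "iet_label da dg"
  let ?p = "prev_in S n"
  note d = iet_codingD[OF cod]
  have S'S: "?S' \<subseteq> S" unfolding derived_def by auto
  have S': "n \<in> ?S'" "m \<in> ?S'" "n < m" using consecD[OF nm] by auto
  have p: "?p \<in> S" "?N ?p 1 = n" using prev_in_next_in[OF d(5)] S'S S'(1) by auto
  note less = strict_mono_less[OF next_in_iter_strict_mono[OF d(5) p(1)]]
  obtain i where i: "i \<in> {1..5}" "?N n i \<in> ?S'" using iet_coding_derived_within_five[OF cod] S'S S'(1) by blast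
  have "?N n i = ?N ?p (i + 1)" by (subst p(2)[symmetric]) (simp add: funpow_swap1)
  with i have Ni: "?N ?p (i + 1) \<in> ?S'" "n < ?N ?p (i + 1)" using less[of 1 "i + 1"] p(2) by auto
  have m_le: "m \<le> ?N ?p (i + 1)"
    using nm Ni unfolding consec_def by (meson not_le)
  obtain j where j: "1 < j" "j \<le> i + 1" "m = ?N ?p j"
  proof (cases "m = ?N ?p (i + 1)")
    case True then show ?thesis using i(1) by (intro that[of "i + 1"]) auto
  next
    case False
    have "?p < n" using consecD[OF consec_prev_in[OF d(5)]] S'(1) S'S by blast
    then have "?p < m" using S'(3) by linarith
    moreover have "m \<in> S" "m < ?N ?p (i + 1)" using S'(2) S'S m_le False by auto
    ultimately obtain j where "0 < j" "j < i + 1" "m = ?N ?p j"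
      using next_in_iter_between[OF d(5) p(1)] by blast
    moreover have "j \<noteq> 1" using S'(3) p(2) \<open>m = ?N ?p j\<close> by auto
    ultimately show ?thesis by (intro that[of j]) auto
  qed
  have between: "?N ?p k \<notin> ?S'" if "1 < k" "k < j" for k
  proof
    assume "?N ?p k \<in> ?S'"
    moreover have "n < ?N ?p k" "?N ?p k < m" using less[of 1 k] less[of k j] that j(3) p(2) by auto
    ultimately show False using nm unfolding consec_def by blast
  qed
  have sw: "?L (y (?N ?p (k - 1))) = ?L (y (?N ?p (k + 1))) \<longleftrightarrow> k = 1 \<or> k = j"
    if "1 \<le> k" "k \<le> j" for k
  proof -
    have "?N ?p k \<in> ?S' \<longleftrightarrow> k = 1 \<or> k = j"
    proof (cases "k = 1 \<or> k = j")
      case True then show ?thesis using S'(1,2) p(2) j(3) by auto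
    next
      case False then show ?thesis using between[of k] that by simp
    qed
    then show ?thesis using iet_coding_derived_iff_iter[OF cod p(1), of k] that by simp
  qed
  have "j \<le> 6" using j(2) i(1) by simp
  from iet_orbit_next_sandwiched[OF iet_coding_orbit[OF cod p(1)] d(1) le _ this sw] j(1)
  show ?thesis using j(3) p(2) by simp
qed

lemma iet_coding_derived:
  assumes cod: "iet_coding S da dg y c \<pi>" and le: "da \<le> dg"
  shows "iet_coding (derived c S) (ren_da da dg) (ren_dg da dg) (\<lambda>n. ren_coord da dg (y n)) c
    (\<pi> \<circ> ren_label da dg)"
proof -
  note d = iet_codingD[OF cod] and ren = iet_coding_derived_renormalized[OF cod le]
  have "inj (\<pi> \<circ> ren_label da dg)"
    using d(4) by (metis inj_compose injI ren_label_ren_label)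
  moreover have "c n = (\<pi> \<circ> ren_label da dg) (iet_label (ren_da da dg) (ren_dg da dg) (ren_coord da dg (y n)))"
    if "n \<in> derived c S" for n
    using ren(1)[OF that] d(7) that unfolding derived_def by auto
  ultimately show ?thesis
    unfolding iet_coding_def using ren_params[OF d(1) le d(3)] ren(2) iet_coding_derived_unbounded[OF cod]
      iet_coding_derived_consec[OF cod le] by blast
qed

lemma iet_coding_derived_iter:
  assumes "iet_coding UNIV da dg y c \<pi>"
  shows "\<exists>da dg y \<pi>. iet_coding ((derived c ^^ n) UNIV) da dg y c \<pi>"
proof (induction n)
  case (Suc n)
  then obtain da dg y \<pi> where "iet_coding ((derived c ^^ n) UNIV) da dg y c \<pi>" by blast
  then obtain da dg y \<pi> where "da \<le> dg" "iet_coding ((derived c ^^ n) UNIV) da dg y c \<pi>"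
    by (rule iet_coding_wlog)
  from iet_coding_derived[OF this(2,1)] show ?case by auto
qed (use assms in auto)

lemma iet_coding_infinitely_derivable:
  assumes "iet_coding UNIV da dg y c \<pi>"
  shows "infinitely_derivable c"
  unfolding infinitely_derivable_def derivable_def
proof
  fix n
  show "admissible c ((derived c ^^ n) UNIV) \<and> admissible c (derived c ((derived c ^^ n) UNIV))"
    using iet_coding_derived_iter[OF assms, of n] iet_coding_derived_iter[OF assms, of "Suc n"]
      iet_coding_admissible by auto
qed

section \<open>Lattice coordinates of the hexagonal tiling\<close>

text \<open>z = of_real (coord_g z) + of_real (coord_a z) * hex_vertex 1.\<close>

definition coord_a :: "complex \<Rightarrow> real" where "coord_a z = 2 * Im z / sqrt 3"
definition coord_g :: "complex \<Rightarrow> real" where "coord_g z = Re z - Im z / sqrt 3"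

lemma sqrt3_pos: "sqrt 3 > (0::real)" by simp

lemma coord_Re_Im: "Im z = sqrt 3 / 2 * coord_a z" "Re z = coord_g z + coord_a z / 2"
  unfolding coord_a_def coord_g_def using sqrt3_pos by (auto simp: field_simps)

lemma complex_eq_coord: "z = w \<longleftrightarrow> coord_a z = coord_a w \<and> coord_g z = coord_g w"
proof
  assume "coord_a z = coord_a w \<and> coord_g z = coord_g w"
  then have "Im z = Im w" "Re z = Re w" using coord_Re_Im[of z] coord_Re_Im[of w] by auto
  then show "z = w" by (simp add: complex_eq_iff)
qed simp

lemma coord_a_add: "coord_a (z + w) = coord_a z + coord_a w" and coord_g_add: "coord_g (z + w) = coord_g z + coord_g w"
  and coord_a_diff: "coord_a (z - w) = coord_a z - coord_a w" and coord_g_diff: "coord_g (z - w) = coord_g z - coord_g w"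
  and coord_a_scale: "coord_a (of_real t * z) = t * coord_a z" and coord_g_scale: "coord_g (of_real t * z) = t * coord_g z"
  unfolding coord_a_def coord_g_def by (auto simp: field_simps)

lemma hex_vertex_0: "hex_vertex 0 = Complex 1 0" by (simp add: hex_vertex_def complex_eq_iff)
lemma hex_vertex_1: "hex_vertex 1 = Complex (1/2) (sqrt 3 / 2)"
  by (simp add: hex_vertex_def complex_eq_iff cos_60 sin_60)
lemma hex_vertex_2: "hex_vertex 2 = Complex (-1/2) (sqrt 3 / 2)"
  by (simp add: hex_vertex_def complex_eq_iff cos_120 sin_120)
lemma hex_vertex_3: "hex_vertex 3 = Complex (-1) 0" by (simp add: hex_vertex_def complex_eq_iff)
lemma hex_vertex_4: "hex_vertex 4 = Complex (-1/2) (- sqrt 3 / 2)"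
proof -
  have e: "pi/3 + pi = (4::real) * pi / 3" by simp
  have c: "cos (4 * pi / 3) = -1/2" using cos_periodic_pi[of "pi/3"] unfolding e cos_60 by simp
  have s: "sin (4 * pi / 3) = - sqrt 3/2" using sin_periodic_pi[of "pi/3"] unfolding e sin_60 by simp
  show ?thesis unfolding hex_vertex_def using c s by (simp add: complex_eq_iff)
qed
lemma hex_vertex_5: "hex_vertex 5 = Complex (1/2) (- sqrt 3 / 2)"
proof -
  have e: "2*pi/3 + pi = (5::real) * pi / 3" by simp
  have c: "cos (5 * pi / 3) = 1/2" using cos_periodic_pi[of "2*pi/3"] unfolding e cos_120 by simp
  have s: "sin (5 * pi / 3) = - sqrt 3/2" using sin_periodic_pi[of "2*pi/3"] unfolding e sin_120 by simp
  show ?thesis unfolding hex_vertex_def using c s by (simp add: complex_eq_iff)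
qed

lemma coord_Complex: "coord_a (Complex x y) = 2 * y / sqrt 3" "coord_g (Complex x y) = x - y / sqrt 3"
  by (simp_all add: coord_a_def coord_g_def)

lemma coord_hex_vertex:
  "coord_a (hex_vertex 0) = 0" "coord_g (hex_vertex 0) = 1"
  "coord_a (hex_vertex 1) = 1" "coord_g (hex_vertex 1) = 0"
  "coord_a (hex_vertex 2) = 1" "coord_g (hex_vertex 2) = -1"
  "coord_a (hex_vertex 3) = 0" "coord_g (hex_vertex 3) = -1"
  "coord_a (hex_vertex 4) = -1" "coord_g (hex_vertex 4) = 0"
  "coord_a (hex_vertex 5) = -1" "coord_g (hex_vertex 5) = 1"
  unfolding hex_vertex_0 hex_vertex_1 hex_vertex_2 hex_vertex_3 hex_vertex_4 hex_vertex_5 coord_Complex using sqrt3_pos by (auto simp: field_simps)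

lemma closed_segment_coord:
  "z \<in> closed_segment p q \<longleftrightarrow> (\<exists>t. 0 \<le> t \<and> t \<le> 1 \<and> coord_a z = (1-t)*coord_a p + t*coord_a q \<and> coord_g z = (1-t)*coord_g p + t*coord_g q)"
proof -
  have "z \<in> closed_segment p q \<longleftrightarrow> (\<exists>t. 0 \<le> t \<and> t \<le> 1 \<and> z = of_real (1-t) * p + of_real t * q)"
    unfolding closed_segment_def by (auto simp: scaleR_conv_of_real)
  also have "\<dots> \<longleftrightarrow> (\<exists>t. 0 \<le> t \<and> t \<le> 1 \<and> coord_a z = (1-t)*coord_a p + t*coord_a q \<and> coord_g z = (1-t)*coord_g p + t*coord_g q)"
    by (simp add: complex_eq_coord coord_a_add coord_g_add coord_a_scale coord_g_scale del: of_real_diff)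
  finally show ?thesis .
qed

lemma side_A_coord: "s \<in> side A \<longleftrightarrow> (coord_a s = 1 \<and> -1 \<le> coord_g s \<and> coord_g s \<le> 0) \<or> (coord_a s = -1 \<and> 0 \<le> coord_g s \<and> coord_g s \<le> 1)"
proof -
  have 1: "s \<in> closed_segment (hex_vertex 1) (hex_vertex 2) \<longleftrightarrow> (coord_a s = 1 \<and> -1 \<le> coord_g s \<and> coord_g s \<le> 0)"
    unfolding closed_segment_coord coord_hex_vertex by (auto intro!: exI[of _ "- coord_g s"])
  have 2: "s \<in> closed_segment (hex_vertex 4) (hex_vertex 5) \<longleftrightarrow> (coord_a s = -1 \<and> 0 \<le> coord_g s \<and> coord_g s \<le> 1)"
    unfolding closed_segment_coord coord_hex_vertex by (auto intro!: exI[of _ "coord_g s"])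
  show ?thesis using 1 2 by simp
qed

lemma side_B_coord: "s \<in> side B \<longleftrightarrow> (coord_a s + coord_g s = 1 \<and> 0 \<le> coord_a s \<and> coord_a s \<le> 1) \<or> (coord_a s + coord_g s = -1 \<and> -1 \<le> coord_a s \<and> coord_a s \<le> 0)"
proof -
  have 1: "s \<in> closed_segment (hex_vertex 0) (hex_vertex 1) \<longleftrightarrow> (coord_a s + coord_g s = 1 \<and> 0 \<le> coord_a s \<and> coord_a s \<le> 1)"
    unfolding closed_segment_coord coord_hex_vertex by (auto intro!: exI[of _ "coord_a s"])
  have 2: "s \<in> closed_segment (hex_vertex 3) (hex_vertex 4) \<longleftrightarrow> (coord_a s + coord_g s = -1 \<and> -1 \<le> coord_a s \<and> coord_a s \<le> 0)"
    unfolding closed_segment_coord coord_hex_vertex by (auto intro!: exI[of _ "- coord_a s"])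
  show ?thesis using 1 2 by simp
qed

lemma side_C_coord: "s \<in> side C \<longleftrightarrow> (coord_g s = 1 \<and> -1 \<le> coord_a s \<and> coord_a s \<le> 0) \<or> (coord_g s = -1 \<and> 0 \<le> coord_a s \<and> coord_a s \<le> 1)"
proof -
  have 1: "s \<in> closed_segment (hex_vertex 5) (hex_vertex 0) \<longleftrightarrow> (coord_g s = 1 \<and> -1 \<le> coord_a s \<and> coord_a s \<le> 0)"
    unfolding closed_segment_coord coord_hex_vertex by (auto intro!: exI[of _ "coord_a s + 1"])
  have 2: "s \<in> closed_segment (hex_vertex 2) (hex_vertex 3) \<longleftrightarrow> (coord_g s = -1 \<and> 0 \<le> coord_a s \<and> coord_a s \<le> 1)"
    unfolding closed_segment_coord coord_hex_vertex by (auto intro!: exI[of _ "1 - coord_a s"])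
  show ?thesis using 1 2 by simp
qed

lemma hex_lattice_coord: "u \<in> hex_lattice \<longleftrightarrow> (\<exists>i j::int. 3 dvd (i - j) \<and> coord_a u = of_int i \<and> coord_g u = of_int j)"
proof
  assume "u \<in> hex_lattice"
  then obtain m n :: int where u: "u = of_int m * Complex (3/2) (sqrt 3 / 2) + of_int n * Complex 0 (sqrt 3)"
    unfolding hex_lattice_def by auto
  have "coord_a u = of_int (m + 2*n)" "coord_g u = of_int (m - n)"
    unfolding u coord_a_def coord_g_def using sqrt3_pos by (auto simp: field_simps)
  moreover have "3 dvd ((m + 2*n) - (m - n))" by simp
  ultimately show "\<exists>i j::int. 3 dvd (i - j) \<and> coord_a u = of_int i \<and> coord_g u = of_int j" by blast
next
  assume "\<exists>i j::int. 3 dvd (i - j) \<and> coord_a u = of_int i \<and> coord_g u = of_int j"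
  then obtain i j :: int where ij: "3 dvd (i - j)" "coord_a u = of_int i" "coord_g u = of_int j" by blast
  obtain n where n: "i - j = 3 * n" using ij(1) by blast
  define m where "m = j + n"
  have "u = of_int m * Complex (3/2) (sqrt 3 / 2) + of_int n * Complex 0 (sqrt 3)"
    unfolding complex_eq_coord ij using sqrt3_pos n unfolding m_def coord_a_def coord_g_def by (auto simp: field_simps)
  then show "u \<in> hex_lattice" unfolding hex_lattice_def by blast
qed

lemma edges_iff: "z \<in> edges l \<longleftrightarrow> (\<exists>u\<in>hex_lattice. z - u \<in> side l)"
  unfolding edges_def by (auto simp: image_iff) (metis add_diff_cancel_right', metis diff_add_cancel)

text \<open>In lattice coordinates: hex_side l is the pair of sides labelled l of the hexagon centred at 0,
  and exit_side l a g i j says that (a, g) lies in the relative interior of the upper side l of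
  the hexagon centred at (i, j), the one through which lines of nonnegative direction leave it.\<close>

fun hex_side :: "lbl \<Rightarrow> real \<Rightarrow> real \<Rightarrow> bool" where
  "hex_side A a g = ((a = 1 \<and> -1 \<le> g \<and> g \<le> 0) \<or> (a = -1 \<and> 0 \<le> g \<and> g \<le> 1))"
| "hex_side B a g = ((a + g = 1 \<and> 0 \<le> a \<and> a \<le> 1) \<or> (a + g = -1 \<and> -1 \<le> a \<and> a \<le> 0))"
| "hex_side C a g = ((g = 1 \<and> -1 \<le> a \<and> a \<le> 0) \<or> (g = -1 \<and> 0 \<le> a \<and> a \<le> 1))"

definition on_edge :: "lbl \<Rightarrow> real \<Rightarrow> real \<Rightarrow> bool" where
  "on_edge l a g \<longleftrightarrow> (\<exists>i j::int. 3 dvd (i - j) \<and> hex_side l (a - of_int i) (g - of_int j))"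

definition is_vertex :: "real \<Rightarrow> real \<Rightarrow> bool" where
  "is_vertex a g \<longleftrightarrow> (\<exists>i j::int. a = of_int i \<and> g = of_int j \<and> \<not> 3 dvd (i - j))"

fun exit_side :: "lbl \<Rightarrow> real \<Rightarrow> real \<Rightarrow> int \<Rightarrow> int \<Rightarrow> bool" where
  "exit_side A a g i j = (a = of_int i + 1 \<and> of_int j - 1 < g \<and> g < of_int j)"
| "exit_side B a g i j = (a + g = of_int i + of_int j + 1 \<and> of_int i < a \<and> a < of_int i + 1)"
| "exit_side C a g i j = (g = of_int j + 1 \<and> of_int i - 1 < a \<and> a < of_int i)"

lemma side_coord: "s \<in> side l \<longleftrightarrow> hex_side l (coord_a s) (coord_g s)"
  by (cases l) (simp_all only: side_A_coord side_B_coord side_C_coord hex_side.simps)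

lemma coord_surj: "\<exists>u. coord_a u = x \<and> coord_g u = y"
  by (rule exI[of _ "Complex (y + x/2) (sqrt 3 / 2 * x)"]) (simp add: coord_Complex)

lemma edges_coord: "z \<in> edges l \<longleftrightarrow> on_edge l (coord_a z) (coord_g z)"
proof
  assume "z \<in> edges l"
  then obtain u where u: "u \<in> hex_lattice" "z - u \<in> side l" using edges_iff by blast
  obtain i j where ij: "3 dvd (i - j)" "coord_a u = of_int i" "coord_g u = of_int j" using u(1) hex_lattice_coord by blast
  show "on_edge l (coord_a z) (coord_g z)" unfolding on_edge_def using u(2) ij side_coord[of "z - u"] by (auto simp: coord_a_diff coord_g_diff)
next
  assume "on_edge l (coord_a z) (coord_g z)"
  then obtain i j :: int where ij: "3 dvd (i - j)" "hex_side l (coord_a z - of_int i) (coord_g z - of_int j)" unfolding on_edge_def by blast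
  obtain u where u: "coord_a u = of_int i" "coord_g u = of_int j" using coord_surj by blast
  have "u \<in> hex_lattice" using hex_lattice_coord ij u by blast
  moreover have "z - u \<in> side l" using side_coord[of "z - u"] ij u by (simp add: coord_a_diff coord_g_diff)
  ultimately show "z \<in> edges l" using edges_iff by blast
qed

lemma is_vertex_marked: "is_vertex (coord_a z) (coord_g z) \<Longrightarrow> z \<in> marked_lifts"
proof -
  assume "is_vertex (coord_a z) (coord_g z)"
  then obtain i j :: int where ij: "coord_a z = of_int i" "coord_g z = of_int j" "\<not> 3 dvd (i - j)" unfolding is_vertex_def by blast
  show "z \<in> marked_lifts"
  proof (cases "3 dvd (i - 1 - j)")
    case True
    obtain u where u: "coord_a u = of_int (i - 1)" "coord_g u = of_int j" using coord_surj by blast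
    have uL: "u \<in> hex_lattice" using hex_lattice_coord u True by blast
    have "z = hex_vertex 1 + u" unfolding complex_eq_coord using ij u coord_hex_vertex by (simp add: coord_a_add coord_g_add)
    then show ?thesis unfolding marked_lifts_def using uL by (intro CollectI exI[of _ 1] exI[of _ u]) auto
  next
    case False
    then have d: "3 dvd (i - (j - 1))" using ij(3) by presburger
    obtain u where u: "coord_a u = of_int i" "coord_g u = of_int (j - 1)" using coord_surj by blast
    have uL: "u \<in> hex_lattice" using hex_lattice_coord u d by blast
    have "z = hex_vertex 0 + u" unfolding complex_eq_coord using ij u coord_hex_vertex by (simp add: coord_a_add coord_g_add)
    then show ?thesis unfolding marked_lifts_def using uL by (intro CollectI exI[of _ 0] exI[of _ u]) auto
  qed
qed

lemma is_vertexI: "a = of_int x \<Longrightarrow> g = of_int y \<Longrightarrow> \<not> 3 dvd (x - y) \<Longrightarrow> is_vertex a g"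
  unfolding is_vertex_def by blast

lemma exit_side_on_edge: "3 dvd (i - j) \<Longrightarrow> exit_side l a g i j \<Longrightarrow> on_edge l a g"
  unfolding on_edge_def by (rule exI[of _ i], rule exI[of _ j]) (cases l; auto)

lemma not_is_vertexD: "\<not> is_vertex a g \<Longrightarrow> a = of_int x \<Longrightarrow> g = of_int y \<Longrightarrow> 3 dvd (x - y)"
  using is_vertexI by blast

lemma on_edge_exit_side:
  assumes E: "on_edge l a g" and nv: "\<not> is_vertex a g"
  shows "\<exists>i j. 3 dvd (i - j) \<and> exit_side l a g i j"
proof -
  obtain i j :: int where dv: "3 dvd (i - j)" and s: "hex_side l (a - of_int i) (g - of_int j)"
    using E unfolding on_edge_def by blast
  have ne: "3 dvd (x - y) \<or> a \<noteq> of_int x \<or> g \<noteq> of_int y" for x y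
    using not_is_vertexD[OF nv] by blast
  show ?thesis
  proof (cases l)
    case A
    with s consider "a = of_int i + 1" "of_int j - 1 \<le> g" "g \<le> of_int j"
      | "a = of_int i - 1" "of_int j \<le> g" "g \<le> of_int j + 1" by auto
    then show ?thesis
    proof cases
      case 1
      with ne[of "i + 1" "j - 1"] ne[of "i + 1" j] dv have "exit_side A a g i j" by auto presburger+
      with A dv show ?thesis by blast
    next
      case 2
      with ne[of "i - 1" "j + 1"] ne[of "i - 1" j] dv have "exit_side A a g (i - 2) (j + 1)" by auto presburger+
      moreover have "3 dvd ((i - 2) - (j + 1))" using dv by presburger
      ultimately show ?thesis using A by blast
    qed
  next
    case B
    with s consider "a + g = of_int i + of_int j + 1" "of_int i \<le> a" "a \<le> of_int i + 1"
      | "a + g = of_int i + of_int j - 1" "of_int i - 1 \<le> a" "a \<le> of_int i" by auto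
    then show ?thesis
    proof cases
      case 1
      with ne[of i "j + 1"] ne[of "i + 1" j] dv have "exit_side B a g i j" by auto presburger+
      with B dv show ?thesis by blast
    next
      case 2
      with ne[of "i - 1" j] ne[of i "j - 1"] dv have "exit_side B a g (i - 1) (j - 1)" by auto presburger+
      moreover have "3 dvd ((i - 1) - (j - 1))" using dv by presburger
      ultimately show ?thesis using B by blast
    qed
  next
    case C
    with s consider "g = of_int j + 1" "of_int i - 1 \<le> a" "a \<le> of_int i"
      | "g = of_int j - 1" "of_int i \<le> a" "a \<le> of_int i + 1" by auto
    then show ?thesis
    proof cases
      case 1
      with ne[of "i - 1" "j + 1"] ne[of i "j + 1"] dv have "exit_side C a g i j" by auto presburger+
      with C dv show ?thesis by blast
    next
      case 2
      with ne[of i "j - 1"] ne[of "i + 1" "j - 1"] dv have "exit_side C a g (i + 1) (j - 2)" by auto presburger+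
      moreover have "3 dvd ((i + 1) - (j - 2))" using dv by presburger
      ultimately show ?thesis using C by blast
    qed
  qed
qed

lemma of_int_strict_between: "(of_int m :: real) < x \<Longrightarrow> x < of_int m + 1 \<Longrightarrow> x \<noteq> of_int k"
  by (smt (verit) of_int_less_iff of_int_add of_int_1)

lemma exit_side_label:
  assumes X: "exit_side l a g i j" and E: "on_edge l' a g"
  shows "l' = l"
proof -
  obtain i' j' :: int where s: "hex_side l' (a - of_int i') (g - of_int j')" using E unfolding on_edge_def by blast
  show ?thesis
  proof (cases l)
    case A
    then have x: "a = of_int i + 1" "of_int (j - 1) < g" "g < of_int (j - 1) + 1" using X by auto
    show ?thesis
    proof (cases l')
      case B
      then have "g = of_int (i' + j' + 1 - (i + 1)) \<or> g = of_int (i' + j' - 1 - (i + 1))" using s x(1) by auto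
      then show ?thesis using of_int_strict_between[OF x(2,3)] by blast
    next
      case C
      then have "g = of_int (j' + 1) \<or> g = of_int (j' - 1)" using s by auto
      then show ?thesis using of_int_strict_between[OF x(2,3)] by blast
    qed (use A in simp)
  next
    case B
    then have x: "a + g = of_int (i + j + 1)" "of_int i < a" "a < of_int i + 1" using X by auto
    show ?thesis
    proof (cases l')
      case A
      then have "a = of_int (i' + 1) \<or> a = of_int (i' - 1)" using s by auto
      then show ?thesis using of_int_strict_between[OF x(2,3)] by blast
    next
      case C
      then have "a = of_int (i + j + 1 - (j' + 1)) \<or> a = of_int (i + j + 1 - (j' - 1))" using s x(1) by (auto simp: algebra_simps)
      then show ?thesis using of_int_strict_between[OF x(2,3)] by blast
    qed (use B in simp)
  next
    case C
    then have x: "g = of_int (j + 1)" "of_int (i - 1) < a" "a < of_int (i - 1) + 1" using X by auto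
    show ?thesis
    proof (cases l')
      case A
      then have "a = of_int (i' + 1) \<or> a = of_int (i' - 1)" using s by auto
      then show ?thesis using of_int_strict_between[OF x(2,3)] by blast
    next
      case B
      then have "a = of_int (i' + j' + 1 - (j + 1)) \<or> a = of_int (i' + j' - 1 - (j + 1))" using s x(1) by (auto simp: algebra_simps)
      then show ?thesis using of_int_strict_between[OF x(2,3)] by blast
    qed (use C in simp)
  qed
qed

lemma exit_side_unique:
  assumes "exit_side l a g i j" "exit_side l a g i' j'"
  shows "i = i' \<and> j = j'"
  using assms by (cases l; simp; smt (verit) of_int_less_iff of_int_add of_int_1 of_int_eq_iff)

lemma inner_not_on_edge:
  assumes dv: "3 dvd (i - j)"
    and h: "\<bar>a - of_int i\<bar> < 1" "\<bar>g - of_int j\<bar> < 1" "\<bar>a + g - of_int i - of_int j\<bar> < 1"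
  shows "\<not> on_edge l a g"
proof
  assume "on_edge l a g"
  then obtain i' j' :: int where dv': "3 dvd (i' - j')" and s: "hex_side l (a - of_int i') (g - of_int j')"
    unfolding on_edge_def by blast
  have "\<bar>a - of_int i'\<bar> \<le> 1" "\<bar>g - of_int j'\<bar> \<le> 1" "\<bar>a + g - of_int i' - of_int j'\<bar> \<le> 1"
    using s by (cases l; auto simp: abs_le_iff)+
  then have "\<bar>of_int (i - i')\<bar> < (2::real)" "\<bar>of_int (j - j')\<bar> < (2::real)"
    "\<bar>of_int (i - i' + (j - j'))\<bar> < (2::real)"
    using h by (auto simp: abs_less_iff abs_le_iff)
  then have "\<bar>i - i'\<bar> < 2" "\<bar>j - j'\<bar> < 2" "\<bar>i - i' + (j - j')\<bar> < 2"
    by (simp_all only: of_int_abs[symmetric] of_int_less_numeral_iff)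
  with dv dv' have "i' = i" "j' = j" by presburger+
  then show False using s h by (cases l) auto
qed

section \<open>Lines in the tiling\<close>

lemma exit_side_transversal:
  assumes X: "exit_side l a g i j" and d: "0 \<le> da" "0 \<le> dg" "0 < da + dg"
    and pA: "l = A \<Longrightarrow> 0 < da" and pC: "l = C \<Longrightarrow> 0 < dg"
  shows "iet_generic da dg (dg*(a - of_int i) - da*(g - of_int j)) \<and> iet_label da dg (dg*(a - of_int i) - da*(g - of_int j)) = l"
proof (cases l)
  case A
  then have x: "a - of_int i = 1" "-1 < g - of_int j" "g - of_int j < 0" and da: "0 < da" using X pA by auto
  have p1: "da * (g - of_int j) < 0" using da x by (simp add: mult_pos_neg)
  have p2: "0 < da * (g - of_int j + 1)" using da x by simp
  have "dg < dg*(a - of_int i) - da*(g - of_int j)" "dg*(a - of_int i) - da*(g - of_int j) < da + dg"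
    using p1 p2 x by (auto simp: algebra_simps)
  then show ?thesis using A d unfolding iet_generic_def iet_label_def by auto
next
  case B
  then have x: "g - of_int j = 1 - (a - of_int i)" "0 < a - of_int i" "a - of_int i < 1" using X by auto
  define al where "al = a - of_int i"
  have gj: "g - of_int j = 1 - al" using x(1) unfolding al_def .
  have e: "dg*(a - of_int i) - da*(g - of_int j) = al * (da + dg) - da"
    unfolding gj al_def[symmetric] by (simp add: algebra_simps)
  have p1: "0 < al * (da + dg)" using x d unfolding al_def by simp
  have p2: "0 < (1 - al) * (da + dg)" using x d unfolding al_def by simp
  have "-da < al * (da + dg) - da" "al * (da + dg) - da < dg" using p1 p2 by (auto simp: algebra_simps)
  then show ?thesis using B d unfolding e iet_generic_def iet_label_def by auto
next
  case C
  then have x: "g - of_int j = 1" "-1 < a - of_int i" "a - of_int i < 0" and dg: "0 < dg" using X pC by auto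
  have p1: "dg * (a - of_int i) < 0" using dg x by (simp add: mult_pos_neg)
  have p2: "0 < dg * (a - of_int i + 1)" using dg x by simp
  have "dg*(a - of_int i) - da*(g - of_int j) < - da" "-(da + dg) < dg*(a - of_int i) - da*(g - of_int j)"
    using p1 p2 x by (auto simp: algebra_simps)
  then show ?thesis using C d unfolding iet_generic_def iet_label_def by auto
qed

text \<open>The offset from the centre of a hexagon to the centre of its neighbour across the upper side l.\<close>

fun hex_step :: "lbl \<Rightarrow> int \<times> int" where
  "hex_step A = (2, -1)" | "hex_step B = (1, 1)" | "hex_step C = (-1, 2)"

lemma exit_side_next_hex:
  assumes X: "exit_side l a g i j" and pA: "l = A \<Longrightarrow> 0 < da" and pC: "l = C \<Longrightarrow> 0 < dg"
  defines "i2 \<equiv> i + fst (hex_step l)" and "j2 \<equiv> j + snd (hex_step l)"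
  shows "-1 \<le> a - of_int i2" "a - of_int i2 < 1" "-1 \<le> g - of_int j2" "g - of_int j2 < 1"
    "-1 \<le> (a - of_int i2) + (g - of_int j2)" "(a - of_int i2) + (g - of_int j2) < 1"
    "a - of_int i2 = -1 \<Longrightarrow> 0 < da" "g - of_int j2 = -1 \<Longrightarrow> 0 < dg"
  using X pA pC unfolding i2_def j2_def by (cases l; auto)+

lemma below_one_until:
  fixes u d s1 :: real
  assumes "u < 1" "0 \<le> d" "0 < d \<Longrightarrow> s1 \<le> (1 - u) / d"
  shows "s < s1 \<Longrightarrow> u + s*d < 1" and "u + s1*d \<le> 1"
proof -
  show "u + s1*d \<le> 1"
    using assms by (cases "0 < d") (simp_all add: pos_le_divide_eq algebra_simps)
  show "u + s*d < 1" if "s < s1"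
  proof (cases "0 < d")
    case True
    then have "s < (1 - u) / d" using assms(3) that by linarith
    then show ?thesis using True by (simp add: pos_less_divide_eq algebra_simps)
  qed (use assms in simp)
qed

lemma above_minus_one_after:
  fixes u d s :: real
  assumes "-1 \<le> u" "0 \<le> d" "0 < s" "u = -1 \<Longrightarrow> 0 < d"
  shows "-1 < u + s*d"
proof (cases "u = -1")
  case False
  moreover have "0 \<le> s*d" using assms by simp
  ultimately show ?thesis using assms(1) by linarith
qed (use assms in simp)

lemma hex_first_exit:
  fixes ua ug da dg :: real
  assumes d: "0 \<le> da" "0 \<le> dg" "0 < da + dg"
    and b: "-1 \<le> ua" "ua < 1" "-1 \<le> ug" "ug < 1" "-1 \<le> ua + ug" "ua + ug < 1"
      "ua = -1 \<Longrightarrow> 0 < da" "ug = -1 \<Longrightarrow> 0 < dg"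
  obtains s1 where "0 < s1"
    "\<And>s. 0 < s \<Longrightarrow> s < s1 \<Longrightarrow> \<bar>ua + s*da\<bar> < 1 \<and> \<bar>ug + s*dg\<bar> < 1 \<and> \<bar>ua + ug + s*(da + dg)\<bar> < 1"
    "-1 < ua + s1*da" "-1 < ug + s1*dg" "-1 < ua + ug + s1*(da + dg)"
    "ua + s1*da \<le> 1" "ug + s1*dg \<le> 1" "ua + ug + s1*(da + dg) \<le> 1"
    "ua + s1*da = 1 \<or> ug + s1*dg = 1 \<or> ua + ug + s1*(da + dg) = 1"
proof -
  define sb where "sb = (1 - (ua + ug)) / (da + dg)"
  define sa where "sa = (if 0 < da then (1 - ua)/da else sb)"
  define sg where "sg = (if 0 < dg then (1 - ug)/dg else sb)"
  define s1 where "s1 = min sb (min sa sg)"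
  have "0 < sb" unfolding sb_def using b d by simp
  then have s1: "0 < s1" unfolding s1_def sa_def sg_def using b by simp
  note ua = below_one_until[of ua da s1] and ug = below_one_until[of ug dg s1]
    and ub = below_one_until[of "ua + ug" "da + dg" s1]
  have up: "ua + s*da < 1" "ug + s*dg < 1" "ua + ug + s*(da + dg) < 1" if "s < s1" for s
    using ua(1) ug(1) ub(1) b d that unfolding s1_def sa_def sg_def sb_def by auto
  have le: "ua + s1*da \<le> 1" "ug + s1*dg \<le> 1" "ua + ug + s1*(da + dg) \<le> 1"
    using ua(2) ug(2) ub(2) b d unfolding s1_def sa_def sg_def sb_def by auto
  have low: "-1 < ua + s*da" "-1 < ug + s*dg" "-1 < ua + ug + s*(da + dg)" if "0 < s" for s
    using above_minus_one_after[of ua da s] above_minus_one_after[of ug dg s]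
      above_minus_one_after[of "ua + ug" "da + dg" s] that d b by auto
  have "s1 = sb \<or> s1 = sa \<or> s1 = sg" unfolding s1_def by linarith
  then have "ua + s1*da = 1 \<or> ug + s1*dg = 1 \<or> ua + ug + s1*(da + dg) = 1"
    unfolding sa_def sg_def sb_def using d by (auto split: if_splits)
  then show ?thesis
  proof (intro that)
    show "\<bar>ua + s*da\<bar> < 1 \<and> \<bar>ug + s*dg\<bar> < 1 \<and> \<bar>ua + ug + s*(da + dg)\<bar> < 1"
      if "0 < s" "s < s1" for s
      using up[OF that(2)] low[OF that(1)] by (simp add: abs_less_iff)
  qed (use s1 le low[OF s1] in auto)
qed

lemma upper_boundary_exit_side:
  fixes a g :: real
  assumes lat: "3 dvd (i - j)" and nv: "\<not> is_vertex a g"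
    and lo: "-1 < a - of_int i" "-1 < g - of_int j" "-1 < (a - of_int i) + (g - of_int j)"
    and up: "a - of_int i \<le> 1" "g - of_int j \<le> 1" "(a - of_int i) + (g - of_int j) \<le> 1"
    and on: "a - of_int i = 1 \<or> g - of_int j = 1 \<or> (a - of_int i) + (g - of_int j) = 1"
  shows "\<exists>l. exit_side l a g i j"
proof -
  have ne: "3 dvd (x - y) \<or> a \<noteq> of_int x \<or> g \<noteq> of_int y" for x y
    using not_is_vertexD[OF nv] by blast
  consider "a - of_int i = 1" | "g - of_int j = 1" "a - of_int i \<noteq> 1"
    | "a - of_int i \<noteq> 1" "g - of_int j \<noteq> 1" using on by blast
  then show ?thesis
  proof cases
    case 1
    with ne[of "i + 1" j] lat lo up have "exit_side A a g i j" by auto presburger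
    then show ?thesis ..
  next
    case 2
    with ne[of i "j + 1"] lat lo up have "exit_side C a g i j" by auto presburger
    then show ?thesis ..
  next
    case 3
    with on lo up have "exit_side B a g i j" by auto
    then show ?thesis ..
  qed
qed

lemma next_exit_side:
  assumes nm: "\<forall>t. \<not> is_vertex (a0 + t*da) (g0 + t*dg)" and d: "0 \<le> da" "0 \<le> dg" "0 < da + dg"
    and lat: "3 dvd (i - j)"
    and b: "-1 \<le> a0 + t0*da - of_int i" "a0 + t0*da - of_int i < 1"
      "-1 \<le> g0 + t0*dg - of_int j" "g0 + t0*dg - of_int j < 1"
      "-1 \<le> (a0 + t0*da - of_int i) + (g0 + t0*dg - of_int j)" "(a0 + t0*da - of_int i) + (g0 + t0*dg - of_int j) < 1"
      "a0 + t0*da - of_int i = -1 \<Longrightarrow> 0 < da" "g0 + t0*dg - of_int j = -1 \<Longrightarrow> 0 < dg"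
  shows "\<exists>t1>t0. (\<forall>t. t0 < t \<longrightarrow> t < t1 \<longrightarrow> (\<forall>l. \<not> on_edge l (a0 + t*da) (g0 + t*dg))) \<and>
            (\<exists>l'. exit_side l' (a0 + t1*da) (g0 + t1*dg) i j)"
proof -
  define ua where "ua = a0 + t0*da - of_int i"
  define ug where "ug = g0 + t0*dg - of_int j"
  have e: "a0 + t*da - of_int i = ua + (t - t0)*da" "g0 + t*dg - of_int j = ug + (t - t0)*dg"
    "(a0 + t*da) + (g0 + t*dg) - of_int i - of_int j = ua + ug + (t - t0)*(da + dg)" for t
    unfolding ua_def ug_def by (simp_all add: algebra_simps)
  obtain s1 where s1: "0 < s1"
    and inner: "\<And>s. 0 < s \<Longrightarrow> s < s1 \<Longrightarrow> \<bar>ua + s*da\<bar> < 1 \<and> \<bar>ug + s*dg\<bar> < 1 \<and> \<bar>ua + ug + s*(da + dg)\<bar> < 1"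
    and exit: "-1 < ua + s1*da" "-1 < ug + s1*dg" "-1 < ua + ug + s1*(da + dg)"
      "ua + s1*da \<le> 1" "ug + s1*dg \<le> 1" "ua + ug + s1*(da + dg) \<le> 1"
      "ua + s1*da = 1 \<or> ug + s1*dg = 1 \<or> ua + ug + s1*(da + dg) = 1"
    using hex_first_exit[OF d b[folded ua_def ug_def]] by blast
  show ?thesis
  proof (intro exI[of _ "t0 + s1"] conjI allI impI)
    fix t l assume "t0 < t" "t < t0 + s1"
    then have "\<bar>a0 + t*da - of_int i\<bar> < 1" "\<bar>g0 + t*dg - of_int j\<bar> < 1"
      "\<bar>(a0 + t*da) + (g0 + t*dg) - of_int i - of_int j\<bar> < 1"
      unfolding e using inner[of "t - t0"] by auto
    then show "\<not> on_edge l (a0 + t*da) (g0 + t*dg)" using inner_not_on_edge[OF lat] by blast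
  next
    let ?a = "a0 + (t0 + s1)*da" and ?g = "g0 + (t0 + s1)*dg"
    have x: "?a - of_int i = ua + s1*da" "?g - of_int j = ug + s1*dg"
      "(ua + s1*da) + (ug + s1*dg) = ua + ug + s1*(da + dg)"
      using e[of "t0 + s1"] by (simp_all add: algebra_simps)
    show "\<exists>l'. exit_side l' ?a ?g i j"
      by (rule upper_boundary_exit_side[OF lat nm[rule_format]]) (use exit in \<open>simp_all only: x\<close>)
  qed (use s1 in simp)
qed

lemma on_edge_A_direction:
  assumes nv: "\<forall>t. \<not> is_vertex (a0 + t*da) (g0 + t*dg)" and d: "0 \<le> da" "0 < da + dg"
    and e: "on_edge A (a0 + t*da) (g0 + t*dg)"
  shows "0 < da"
proof (rule ccontr)
  assume "\<not> 0 < da"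
  then have da: "da = 0" "0 < dg" using d by auto
  obtain i j :: int where "hex_side A (a0 + t*da - of_int i) (g0 + t*dg - of_int j)"
    using e unfolding on_edge_def by blast
  then have "a0 = of_int (i + 1) \<or> a0 = of_int (i - 1)" using da by auto
  then obtain k :: int where k: "a0 = of_int k" by blast
  define t' where "t' = (of_int (k + 1) - g0) / dg"
  have "is_vertex (a0 + t'*da) (g0 + t'*dg)"
    by (rule is_vertexI[of _ k _ "k + 1"]) (use k da in \<open>simp_all add: t'_def\<close>)
  then show False using nv by blast
qed

lemma on_edge_C_direction:
  assumes nv: "\<forall>t. \<not> is_vertex (a0 + t*da) (g0 + t*dg)" and d: "0 \<le> dg" "0 < da + dg"
    and e: "on_edge C (a0 + t*da) (g0 + t*dg)"
  shows "0 < dg"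
proof (rule ccontr)
  assume "\<not> 0 < dg"
  then have dg: "dg = 0" "0 < da" using d by auto
  obtain i j :: int where "hex_side C (a0 + t*da - of_int i) (g0 + t*dg - of_int j)"
    using e unfolding on_edge_def by blast
  then have "g0 = of_int (j + 1) \<or> g0 = of_int (j - 1)" using dg by auto
  then obtain k :: int where k: "g0 = of_int k" by blast
  define t' where "t' = (of_int (k + 1) - a0) / da"
  have "is_vertex (a0 + t'*da) (g0 + t'*dg)"
    by (rule is_vertexI[of _ "k + 1" _ k]) (use k dg in \<open>simp_all add: t'_def\<close>)
  then show False using nv by blast
qed

lemma next_crossing:
  assumes nv: "\<forall>t. \<not> is_vertex (a0 + t*da) (g0 + t*dg)" and d: "0 \<le> da" "0 \<le> dg" "0 < da + dg"
    and sm: "strict_mono (\<sigma> :: int \<Rightarrow> real)" and rg: "range \<sigma> = {t. \<exists>l. on_edge l (a0 + t*da) (g0 + t*dg)}"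
    and X: "exit_side l (a0 + \<sigma> n * da) (g0 + \<sigma> n * dg) i j" and lat: "3 dvd (i - j)"
    and pA: "l = A \<Longrightarrow> 0 < da" and pC: "l = C \<Longrightarrow> 0 < dg"
  shows "\<exists>l'. exit_side l' (a0 + \<sigma> (n + 1) * da) (g0 + \<sigma> (n + 1) * dg)
    (i + fst (hex_step l)) (j + snd (hex_step l))"
proof -
  define i2 where "i2 = i + fst (hex_step l)"
  define j2 where "j2 = j + snd (hex_step l)"
  have lat2: "3 dvd (i2 - j2)" unfolding i2_def j2_def using lat by (cases l) (simp_all; presburger)+
  obtain t1 where t1: "\<sigma> n < t1" "\<And>t l. \<sigma> n < t \<Longrightarrow> t < t1 \<Longrightarrow> \<not> on_edge l (a0 + t*da) (g0 + t*dg)"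
    and X': "\<exists>l'. exit_side l' (a0 + t1*da) (g0 + t1*dg) i2 j2"
    using next_exit_side[OF nv d lat2 exit_side_next_hex[OF X pA pC, folded i2_def j2_def]] by blast
  have "t1 \<in> range \<sigma>" unfolding rg using X' exit_side_on_edge[OF lat2] by blast
  then obtain m where m: "\<sigma> m = t1" by blast
  have "n < m" using strict_mono_less[OF sm] m t1(1) by blast
  then have "\<sigma> (n + 1) \<le> t1" using strict_mono_less_eq[OF sm, of "n + 1" m] m by simp
  moreover have "\<sigma> (n + 1) \<in> {t. \<exists>l. on_edge l (a0 + t*da) (g0 + t*dg)}" unfolding rg[symmetric] by simp
  then have "\<not> \<sigma> (n + 1) < t1" using t1(2)[of "\<sigma> (n + 1)"] strict_mono_less[OF sm, of n "n + 1"] by auto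
  ultimately show ?thesis using X' unfolding i2_def j2_def by simp
qed

lemma cutting_seq_iet_coding:
  assumes nv: "\<forall>t. \<not> is_vertex (a0 + t*da) (g0 + t*dg)" and d: "0 \<le> da" "0 \<le> dg" "0 < da + dg"
    and sm: "strict_mono (\<sigma> :: int \<Rightarrow> real)" and rg: "range \<sigma> = {t. \<exists>l. on_edge l (a0 + t*da) (g0 + t*dg)}"
    and cn: "\<forall>n. on_edge (c n) (a0 + \<sigma> n * da) (g0 + \<sigma> n * dg)"
  shows "\<exists>y. iet_coding UNIV da dg y c id"
proof -
  let ?a = "\<lambda>n. a0 + \<sigma> n * da" and ?g = "\<lambda>n. g0 + \<sigma> n * dg"
  have pA: "0 < da" if "c n = A" for n using on_edge_A_direction[OF nv d(1,3)] cn that by metis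
  have pC: "0 < dg" if "c n = C" for n using on_edge_C_direction[OF nv d(2,3)] cn that by metis
  have "\<forall>n. \<exists>i j. 3 dvd (i - j) \<and> exit_side (c n) (?a n) (?g n) i j"
    using on_edge_exit_side cn nv by blast
  then obtain I J where IJ: "\<And>n. 3 dvd (I n - J n)" "\<And>n. exit_side (c n) (?a n) (?g n) (I n) (J n)"
    by metis
  define y where "y n = dg * (?a n - of_int (I n)) - da * (?g n - of_int (J n))" for n
  have gy: "iet_generic da dg (y n)" "iet_label da dg (y n) = c n" for n
    unfolding y_def using exit_side_transversal[OF IJ(2) d pA pC] by blast+
  have step: "y (n + 1) = iet_map da dg (y n)" for n
  proof -
    obtain l' where X': "exit_side l' (?a (n + 1)) (?g (n + 1))
        (I n + fst (hex_step (c n))) (J n + snd (hex_step (c n)))"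
      using next_crossing[OF nv d sm rg IJ(2) IJ(1) pA pC] by blast
    then have "l' = c (n + 1)" using exit_side_label cn by metis
    then have IJ': "I (n + 1) = I n + fst (hex_step (c n))" "J (n + 1) = J n + snd (hex_step (c n))"
      using exit_side_unique[OF IJ(2)[of "n + 1"]] X' by auto
    show ?thesis
      using gy(2)[of n] unfolding y_def iet_map_def IJ' by (cases "c n") (simp_all add: algebra_simps)
  qed
  have "y m = iet_map da dg (y n)" if "consec UNIV n m" for n m using step consec_UNIV[OF that] by simp
  then have "iet_coding UNIV da dg y c id" unfolding iet_coding_def using d gy unbounded_UNIV by auto
  then show ?thesis by blast
qed

section \<open>Rotations and the cutting sequences\<close>

definition lattice_cutting_seq :: "real \<Rightarrow> real \<Rightarrow> real \<Rightarrow> real \<Rightarrow> (int \<Rightarrow> lbl) \<Rightarrow> bool" where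
  "lattice_cutting_seq a0 g0 da dg c \<longleftrightarrow> (\<forall>t. \<not> is_vertex (a0 + t*da) (g0 + t*dg)) \<and> (da \<noteq> 0 \<or> dg \<noteq> 0) \<and>
     (\<exists>\<sigma> :: int \<Rightarrow> real. strict_mono \<sigma> \<and> range \<sigma> = {t. \<exists>l. on_edge l (a0 + t*da) (g0 + t*dg)} \<and>
        (\<forall>n. on_edge (c n) (a0 + \<sigma> n * da) (g0 + \<sigma> n * dg)))"

definition has_iet_coding :: "(int \<Rightarrow> lbl) \<Rightarrow> bool" where
  "has_iet_coding c \<longleftrightarrow> (\<exists>da dg y \<pi>. iet_coding UNIV da dg y c \<pi>)"

text \<open>The rotation by \<pi>/3 acts on lattice coordinates as (a, g) \<mapsto> (a + g, -a) and on labels as rot_lbl.\<close>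

definition rot_lbl :: "lbl \<Rightarrow> lbl" where "rot_lbl l = (case l of A \<Rightarrow> B | B \<Rightarrow> C | C \<Rightarrow> A)"
definition rot_lbl_inv :: "lbl \<Rightarrow> lbl" where "rot_lbl_inv l = (case l of A \<Rightarrow> C | B \<Rightarrow> A | C \<Rightarrow> B)"

lemma rot_lbl_rot_lbl_inv[simp]: "rot_lbl (rot_lbl_inv l) = l" by (cases l) (auto simp: rot_lbl_def rot_lbl_inv_def)
lemma inj_rot_lbl: "inj rot_lbl" by (rule injI) (auto simp: rot_lbl_def split: lbl.splits)

lemma ex_rot_lbl: "(\<exists>l. P (rot_lbl l)) \<longleftrightarrow> (\<exists>l. P l)"
proof
  assume "\<exists>l. P l" then obtain l where "P l" by blast
  then have "P (rot_lbl (rot_lbl_inv l))" by simp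
  then show "\<exists>l. P (rot_lbl l)" by blast
qed blast

lemma ex_rot_lbl_on_edge: "(\<exists>l. on_edge (rot_lbl l) a g) \<longleftrightarrow> (\<exists>l. on_edge l a g)"
  using ex_rot_lbl[of "\<lambda>l. on_edge l a g"] by simp

lemma hex_side_rot: "hex_side l (x + y) (-x) \<longleftrightarrow> hex_side (rot_lbl l) x y"
  by (cases l) (auto simp: rot_lbl_def)

lemma on_edge_rot: "on_edge l (a + g) (-a) \<longleftrightarrow> on_edge (rot_lbl l) a g"
proof
  assume "on_edge l (a + g) (-a)"
  then obtain i j :: int where ij: "3 dvd (i - j)" "hex_side l (a + g - of_int i) (- a - of_int j)" unfolding on_edge_def by blast
  have e1: "a + g - of_int i = (a - of_int (-j)) + (g - of_int (i + j))" by simp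
  have e2: "- a - of_int j = - (a - of_int (-j))" by simp
  have "hex_side (rot_lbl l) (a - of_int (-j)) (g - of_int (i + j))" using ij(2) unfolding e1 e2 hex_side_rot .
  moreover have "3 dvd ((-j) - (i + j))" using ij(1) by presburger
  ultimately show "on_edge (rot_lbl l) a g" unfolding on_edge_def by blast
next
  assume "on_edge (rot_lbl l) a g"
  then obtain i j :: int where ij: "3 dvd (i - j)" "hex_side (rot_lbl l) (a - of_int i) (g - of_int j)" unfolding on_edge_def by blast
  have e1: "a + g - of_int (i + j) = (a - of_int i) + (g - of_int j)" by simp
  have e2: "- a - of_int (-i) = - (a - of_int i)" by simp
  have "hex_side l (a + g - of_int (i + j)) (- a - of_int (-i))" unfolding e1 e2 hex_side_rot using ij(2) .
  moreover have "3 dvd ((i + j) - (-i))" using ij(1) by presburger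
  ultimately show "on_edge l (a + g) (-a)" unfolding on_edge_def by blast
qed

lemma is_vertex_rot: "is_vertex (a + g) (-a) \<longleftrightarrow> is_vertex a g"
proof
  assume "is_vertex (a + g) (-a)"
  then obtain i j :: int where ij: "a + g = of_int i" "-a = of_int j" "\<not> 3 dvd (i - j)" unfolding is_vertex_def by blast
  have "a = of_int (-j)" "g = of_int (i + j)" using ij by (simp_all add: algebra_simps)
  moreover have "\<not> 3 dvd ((-j) - (i + j))" using ij(3) by presburger
  ultimately show "is_vertex a g" unfolding is_vertex_def by blast
next
  assume "is_vertex a g"
  then obtain i j :: int where ij: "a = of_int i" "g = of_int j" "\<not> 3 dvd (i - j)" unfolding is_vertex_def by blast
  have "a + g = of_int (i + j)" "-a = of_int (-i)" using ij by simp_all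
  moreover have "\<not> 3 dvd ((i + j) - (-i))" using ij(3) by presburger
  ultimately show "is_vertex (a + g) (-a)" unfolding is_vertex_def by blast
qed

lemma lattice_cutting_seq_rot:
  assumes "lattice_cutting_seq a0 g0 da dg c"
  shows "lattice_cutting_seq (a0 + g0) (-a0) (da + dg) (-da) (rot_lbl_inv \<circ> c)"
proof -
  obtain \<sigma> :: "int \<Rightarrow> real" where nm: "\<forall>t. \<not> is_vertex (a0 + t*da) (g0 + t*dg)" and nz: "da \<noteq> 0 \<or> dg \<noteq> 0"
    and sm: "strict_mono \<sigma>" and rg: "range \<sigma> = {t. \<exists>l. on_edge l (a0 + t*da) (g0 + t*dg)}"
    and cn: "\<forall>n. on_edge (c n) (a0 + \<sigma> n * da) (g0 + \<sigma> n * dg)"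
    using assms unfolding lattice_cutting_seq_def by blast
  have ea: "\<And>t. (a0 + g0) + t*(da + dg) = (a0 + t*da) + (g0 + t*dg)" by (simp add: algebra_simps)
  have eg: "\<And>t. - a0 + t*(- da) = - (a0 + t*da)" by (simp add: algebra_simps)
  have "\<forall>t. \<not> is_vertex ((a0 + g0) + t*(da + dg)) (- a0 + t*(- da))" unfolding ea eg is_vertex_rot using nm by blast
  moreover have "da + dg \<noteq> 0 \<or> - da \<noteq> 0" using nz by auto
  moreover have "range \<sigma> = {t. \<exists>l. on_edge l ((a0 + g0) + t*(da + dg)) (- a0 + t*(- da))}"
    unfolding ea eg on_edge_rot rg ex_rot_lbl_on_edge ..
  moreover have "\<forall>n. on_edge ((rot_lbl_inv \<circ> c) n) ((a0 + g0) + \<sigma> n *(da + dg)) (- a0 + \<sigma> n *(- da))"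
    unfolding ea eg on_edge_rot using cn by simp
  ultimately show ?thesis unfolding lattice_cutting_seq_def using sm by blast
qed

lemma iet_coding_relabel:
  assumes "iet_coding S da dg y c \<pi>" "inj f"
  shows "iet_coding S da dg y (f \<circ> c) (f \<circ> \<pi>)"
  using assms inj_compose unfolding iet_coding_def by auto

lemma has_iet_coding_rot: "has_iet_coding (rot_lbl_inv \<circ> c) \<Longrightarrow> has_iet_coding c"
  unfolding has_iet_coding_def using iet_coding_relabel[OF _ inj_rot_lbl, of UNIV _ _ _ "rot_lbl_inv \<circ> c"]
  by (fastforce simp: comp_def)

lemma lattice_cutting_seq_coding_sector:
  assumes cs: "lattice_cutting_seq a0 g0 da dg c" and d: "0 \<le> da" "0 \<le> dg"
  shows "has_iet_coding c"
proof -
  obtain \<sigma> :: "int \<Rightarrow> real" where nm: "\<forall>t. \<not> is_vertex (a0 + t*da) (g0 + t*dg)" and nz: "da \<noteq> 0 \<or> dg \<noteq> 0"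
    and sm: "strict_mono \<sigma>" and rg: "range \<sigma> = {t. \<exists>l. on_edge l (a0 + t*da) (g0 + t*dg)}"
    and cn: "\<forall>n. on_edge (c n) (a0 + \<sigma> n * da) (g0 + \<sigma> n * dg)"
    using cs unfolding lattice_cutting_seq_def by blast
  have "0 < da + dg" using nz d by linarith
  then obtain y where "iet_coding UNIV da dg y c id" using cutting_seq_iet_coding[OF nm d _ sm rg cn] by blast
  then show ?thesis unfolding has_iet_coding_def by blast
qed

lemma lattice_cutting_seq_coding:
  assumes cs: "lattice_cutting_seq a0 g0 da dg c"
  shows "has_iet_coding c"
proof -
  note r1 = lattice_cutting_seq_rot[OF cs]
  note r2 = lattice_cutting_seq_rot[OF r1]
  note r3 = lattice_cutting_seq_rot[OF r2]
  note r4 = lattice_cutting_seq_rot[OF r3]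
  note r5 = lattice_cutting_seq_rot[OF r4]
  note unrot = has_iet_coding_rot
  consider "0 \<le> da" "0 \<le> dg" | "0 \<le> da + dg" "da \<le> 0" | "0 \<le> dg" "da + dg \<le> 0"
    | "da \<le> 0" "dg \<le> 0" | "da + dg \<le> 0" "0 \<le> da" | "dg \<le> 0" "0 \<le> da + dg" by linarith
  then show ?thesis
  proof cases
    case 1 then show ?thesis using lattice_cutting_seq_coding_sector[OF cs] by blast
  next
    case 2
    have "0 \<le> da + dg" "0 \<le> - da" using 2 by linarith+
    from unrot[OF lattice_cutting_seq_coding_sector[OF r1 this]] show ?thesis .
  next
    case 3
    have "0 \<le> da + dg + - da" "0 \<le> - (da + dg)" using 3 by linarith+
    from unrot[OF unrot[OF lattice_cutting_seq_coding_sector[OF r2 this]]] show ?thesis .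
  next
    case 4
    have "0 \<le> da + dg + - da + - (da + dg)" "0 \<le> - (da + dg + - da)" using 4 by linarith+
    from unrot[OF unrot[OF unrot[OF lattice_cutting_seq_coding_sector[OF r3 this]]]] show ?thesis .
  next
    case 5
    have "0 \<le> da + dg + - da + - (da + dg) + - (da + dg + - da)" "0 \<le> - (da + dg + - da + - (da + dg))"
      using 5 by linarith+
    from unrot[OF unrot[OF unrot[OF unrot[OF lattice_cutting_seq_coding_sector[OF r4 this]]]]] show ?thesis .
  next
    case 6
    have "0 \<le> da + dg + - da + - (da + dg) + - (da + dg + - da) + - (da + dg + - da + - (da + dg))"
      "0 \<le> - (da + dg + - da + - (da + dg) + - (da + dg + - da))" using 6 by linarith+
    from unrot[OF unrot[OF unrot[OF unrot[OF unrot[OF lattice_cutting_seq_coding_sector[OF r5 this]]]]]] show ?thesis .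
  qed
qed

lemma lattice_cutting_seq_of_cutting_seq:
  assumes lt: "linear_trajectory p v" and cs: "is_cutting_seq p v c"
  shows "lattice_cutting_seq (coord_a p) (coord_g p) (coord_a v) (coord_g v) c"
proof -
  have zc: "\<And>t. coord_a (p + of_real t * v) = coord_a p + t * coord_a v" "\<And>t. coord_g (p + of_real t * v) = coord_g p + t * coord_g v"
    by (simp_all add: coord_a_add coord_g_add coord_a_scale coord_g_scale)
  have v0: "v \<noteq> 0" and off_marked: "\<forall>t. p + of_real t * v \<notin> marked_lifts" using lt unfolding linear_trajectory_def by auto
  have "coord_a v \<noteq> 0 \<or> coord_g v \<noteq> 0"
  proof (rule ccontr)
    assume "\<not> (coord_a v \<noteq> 0 \<or> coord_g v \<noteq> 0)"
    then have "v = 0" unfolding complex_eq_coord by (simp add: coord_a_def coord_g_def)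
    then show False using v0 by simp
  qed
  moreover have "\<forall>t. \<not> is_vertex (coord_a p + t * coord_a v) (coord_g p + t * coord_g v)"
  proof (intro allI notI)
    fix t assume "is_vertex (coord_a p + t * coord_a v) (coord_g p + t * coord_g v)"
    then have "is_vertex (coord_a (p + of_real t * v)) (coord_g (p + of_real t * v))" by (simp only: zc)
    then have "p + of_real t * v \<in> marked_lifts" by (rule is_vertex_marked)
    then show False using off_marked by blast
  qed
  moreover obtain \<sigma> :: "int \<Rightarrow> real" where sm: "strict_mono \<sigma>"
    and rg: "range \<sigma> = {t. \<exists>l. p + of_real t * v \<in> edges l}" and cn: "\<forall>n. p + of_real (\<sigma> n) * v \<in> edges (c n)"
    using cs unfolding is_cutting_seq_def by blast
  have "range \<sigma> = {t. \<exists>l. on_edge l (coord_a p + t * coord_a v) (coord_g p + t * coord_g v)}" unfolding rg edges_coord zc ..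
  moreover have "\<forall>n. on_edge (c n) (coord_a p + \<sigma> n * coord_a v) (coord_g p + \<sigma> n * coord_g v)" using cn unfolding edges_coord zc .
  ultimately show ?thesis unfolding lattice_cutting_seq_def using sm by blast
qed

theorem mainTheorem6:
  fixes p v :: complex and c :: "int \<Rightarrow> lbl"
  assumes "linear_trajectory p v"
    and "is_cutting_seq p v c"
  shows "infinitely_derivable c"
proof -
  have "has_iet_coding c" using lattice_cutting_seq_coding[OF lattice_cutting_seq_of_cutting_seq[OF assms]] .
  then obtain da dg y \<pi> where "iet_coding UNIV da dg y c \<pi>" unfolding has_iet_coding_def by blast
  then show ?thesis by (rule iet_coding_infinitely_derivable)
qed

end
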